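(* Let $T$ be the Lr $(\mathbf a,\tau)$ interval exchange transformation with $\tau$ irreducible and $T$ satisfying the Keane Condition, and let $\alpha,\beta\in X$. (i) If $\alpha\ne\beta$, then $\alpha,\beta$ are positively asymptotic (i.e. $\alpha_i=\beta_i$ for all $i\ge N$, some $N$) if and only if there exist $i\in[n]$ (with $b^\tau_i\in D^\tau$) and $k\in\mathbb Z$ such that, with $x=b^\tau_i$, $\{\alpha,\beta\}=\{S^k\mathcal I(x),S^k\tilde{\mathcal I}(x)\}$. (ii) If $\alpha\ne\beta$, then $\alpha,\beta$ are negatively asymptotic (i.e. $\alpha_i=\beta_i$ for all $i\le -N$, some $N$) if and only if there exist $i$ with $b_i\in D$ and $k\in\mathbb Z$ such that, with $x=b_i$, $\{\alpha,\beta\}=\{S^k\mathcal I(x),S^k\tilde{\mathcal I}(x)\}$. (iii) If $\mathcal I(x)=\tilde{\mathcal I}(y)$ for some $x\in[0,1)$, $y\in(0,1]$, then $x=y$ and this common point lies in $R$. (iv) If in addition $\tau$ is fully split, then any doubly asymptotic pair $\alpha,\beta\in X$ satisfies $\alpha=\beta$. Conversely, if $\tau$ is not split, then $X$ contains a doubly asymptotic pair of distinct points.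
   Context: Fix $n\ge 2$, $[n]=\{1,\dots,n\}$, a vector $\mathbf a=(a_1,\dots,a_n)$ with all $a_i>0$ and $\sum_i a_i=1$, and a permutation $\tau$ of $[n]$. Put $b_0=0$, $b_i=\sum_{j=1}^i a_j$, $J_i=[b_{i-1},b_i)$, $\tilde J_i=(b_{i-1},b_i]$ for $i\in[n]$, and $D=\{b_1,\dots,b_{n-1}\}$. Put $b^\tau_0=0$, $b^\tau_i=\sum_{j=1}^i a_{\tau^{-1}(j)}$, $D^\tau=\{b^\tau_1,\dots,b^\tau_{n-1}\}$. The Lr $(\mathbf a,\tau)$ interval exchange transformation $T:[0,1)\to[0,1)$ and its dual $\tilde T:(0,1]\to(0,1]$ are defined by $x\mapsto x-b_{i-1}+b^\tau_{\tau(i)-1}$ for $x\in J_i$ (resp. $x\in\tilde J_i$); both are bijections. $\tau$ is irreducible if $\tau(\{1,\dots,j\})\ne\{1,\dots,j\}$ for $j=1,\dots,n-1$; split if $\tau(j+1)\ne\tau(j)+1$ for $j=1,\dots,n-1$; fully split if it is split and moreover $\tau(1)\ne\tau(n)+1$ and $\tau^{-1}(1)\ne\tau^{-1}(n)+1$. $T$ satisfies the Keane Condition if $D\cap T^k(D)=\emptyset$ for all $k\in\mathbb N$. Let $\Omega=[n]^{\mathbb Z}$ with the product topology and shift $S(\alpha)_i=\alpha_{i+1}$. The itinerary maps $\mathcal I:[0,1)\to\Omega$, $\tilde{\mathcal I}:(0,1]\to\Omega$ are $\mathcal I(x)_k=i\iff T^kx\in J_i$ and $\tilde{\mathcal I}(x)_k=i\iff\tilde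 T^kx\in\tilde J_i$ ($k\in\mathbb Z$). Let $D_\infty=\{0,1\}\cup\bigcup_{k\in\mathbb Z}T^k(D)$, $R=[0,1]\setminus D_\infty$ (the regular points), $X_0=\mathcal I(R)$, and $X=\overline{X_0}$. A pair is doubly asymptotic if it is both positively and negatively asymptotic. *)

theory Defs
  imports "HOL-Analysis.Analysis" "HOL-Combinatorics.Permutations"
begin

definition iet_b :: "(nat \<Rightarrow> real) \<Rightarrow> nat \<Rightarrow> real" where
  "iet_b a i = (\<Sum>j=1..i. a j)"

definition iet_btau :: "(nat \<Rightarrow> real) \<Rightarrow> (nat \<Rightarrow> nat) \<Rightarrow> nat \<Rightarrow> real" where
  "iet_btau a \<tau> i = (\<Sum>j=1..i. a (inv \<tau> j))"

definition iet_J :: "(nat \<Rightarrow> real) \<Rightarrow> nat \<Rightarrow> real set" where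
  "iet_J a i = {iet_b a (i - 1)..<iet_b a i}"

definition iet_Jd :: "(nat \<Rightarrow> real) \<Rightarrow> nat \<Rightarrow> real set" where
  "iet_Jd a i = {iet_b a (i - 1)<..iet_b a i}"

definition iet_D :: "nat \<Rightarrow> (nat \<Rightarrow> real) \<Rightarrow> real set" where
  "iet_D n a = iet_b a ` {1..n-1}"

definition iet_Dtau :: "nat \<Rightarrow> (nat \<Rightarrow> real) \<Rightarrow> (nat \<Rightarrow> nat) \<Rightarrow> real set" where
  "iet_Dtau n a \<tau> = iet_btau a \<tau> ` {1..n-1}"

text \<open>The Lr IET T on [0,1) (values outside [0,1) are irrelevant).\<close>
definition iet_T :: "nat \<Rightarrow> (nat \<Rightarrow> real) \<Rightarrow> (nat \<Rightarrow> nat) \<Rightarrow> real \<Rightarrow> real" where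
  "iet_T n a \<tau> x = (let i = (THE i. i \<in> {1..n} \<and> x \<in> iet_J a i)
      in x - iet_b a (i - 1) + iet_btau a \<tau> (\<tau> i - 1))"

definition iet_Td :: "nat \<Rightarrow> (nat \<Rightarrow> real) \<Rightarrow> (nat \<Rightarrow> nat) \<Rightarrow> real \<Rightarrow> real" where
  "iet_Td n a \<tau> x = (let i = (THE i. i \<in> {1..n} \<and> x \<in> iet_Jd a i)
      in x - iet_b a (i - 1) + iet_btau a \<tau> (\<tau> i - 1))"

definition iet_Tpow :: "nat \<Rightarrow> (nat \<Rightarrow> real) \<Rightarrow> (nat \<Rightarrow> nat) \<Rightarrow> int \<Rightarrow> real \<Rightarrow> real" where
  "iet_Tpow n a \<tau> k = (if 0 \<le> k then iet_T n a \<tau> ^^ nat k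
      else inv_into {0..<1} (iet_T n a \<tau>) ^^ nat (- k))"

definition iet_Tdpow :: "nat \<Rightarrow> (nat \<Rightarrow> real) \<Rightarrow> (nat \<Rightarrow> nat) \<Rightarrow> int \<Rightarrow> real \<Rightarrow> real" where
  "iet_Tdpow n a \<tau> k = (if 0 \<le> k then iet_Td n a \<tau> ^^ nat k
      else inv_into {0<..1} (iet_Td n a \<tau>) ^^ nat (- k))"

text \<open>Itineraries, elements of Omega = [n]^Z represented as int => nat.\<close>
definition itin :: "nat \<Rightarrow> (nat \<Rightarrow> real) \<Rightarrow> (nat \<Rightarrow> nat) \<Rightarrow> real \<Rightarrow> int \<Rightarrow> nat" where
  "itin n a \<tau> x = (\<lambda>k. THE i. i \<in> {1..n} \<and> iet_Tpow n a \<tau> k x \<in> iet_J a i)"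

definition itin_d :: "nat \<Rightarrow> (nat \<Rightarrow> real) \<Rightarrow> (nat \<Rightarrow> nat) \<Rightarrow> real \<Rightarrow> int \<Rightarrow> nat" where
  "itin_d n a \<tau> x = (\<lambda>k. THE i. i \<in> {1..n} \<and> iet_Tdpow n a \<tau> k x \<in> iet_Jd a i)"

definition irreducible_perm :: "nat \<Rightarrow> (nat \<Rightarrow> nat) \<Rightarrow> bool" where
  "irreducible_perm n \<tau> = (\<forall>j\<in>{1..n-1}. \<tau> ` {1..j} \<noteq> {1..j})"

definition split_perm :: "nat \<Rightarrow> (nat \<Rightarrow> nat) \<Rightarrow> bool" where
  "split_perm n \<tau> = (\<forall>j\<in>{1..n-1}. \<tau> (j + 1) \<noteq> \<tau> j + 1)"

definition fully_split_perm :: "nat \<Rightarrow> (nat \<Rightarrow> nat) \<Rightarrow> bool" where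
  "fully_split_perm n \<tau> = (split_perm n \<tau> \<and> \<tau> 1 \<noteq> \<tau> n + 1
      \<and> inv \<tau> 1 \<noteq> inv \<tau> n + 1)"

definition keane :: "nat \<Rightarrow> (nat \<Rightarrow> real) \<Rightarrow> (nat \<Rightarrow> nat) \<Rightarrow> bool" where
  "keane n a \<tau> = (\<forall>k::nat. k \<ge> 1 \<longrightarrow>
      iet_D n a \<inter> (iet_T n a \<tau> ^^ k) ` iet_D n a = {})"

definition iet_Dinf :: "nat \<Rightarrow> (nat \<Rightarrow> real) \<Rightarrow> (nat \<Rightarrow> nat) \<Rightarrow> real set" where
  "iet_Dinf n a \<tau> = {0, 1} \<union> (\<Union>k::int. iet_Tpow n a \<tau> k ` iet_D n a)"

definition iet_R :: "nat \<Rightarrow> (nat \<Rightarrow> real) \<Rightarrow> (nat \<Rightarrow> nat) \<Rightarrow> real set" where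
  "iet_R n a \<tau> = {0..1} - iet_Dinf n a \<tau>"

text \<open>X = closure of I(R) in Omega with the product topology (nat carries the
  discrete topology; Omega is closed in int => nat, so the closures agree).\<close>
definition iet_X :: "nat \<Rightarrow> (nat \<Rightarrow> real) \<Rightarrow> (nat \<Rightarrow> nat) \<Rightarrow> (int \<Rightarrow> nat) set" where
  "iet_X n a \<tau> = closure (itin n a \<tau> ` iet_R n a \<tau>)"

definition shiftk :: "int \<Rightarrow> (int \<Rightarrow> nat) \<Rightarrow> int \<Rightarrow> nat" where
  "shiftk k \<alpha> = (\<lambda>i. \<alpha> (i + k))"

definition pos_asymp :: "(int \<Rightarrow> nat) \<Rightarrow> (int \<Rightarrow> nat) \<Rightarrow> bool" where
  "pos_asymp \<alpha> \<beta> = (\<exists>N. \<forall>i\<ge>N. \<alpha> i = \<beta> i)"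

definition neg_asymp :: "(int \<Rightarrow> nat) \<Rightarrow> (int \<Rightarrow> nat) \<Rightarrow> bool" where
  "neg_asymp \<alpha> \<beta> = (\<exists>N. \<forall>i\<le>-N. \<alpha> i = \<beta> i)"

definition doubly_asymp :: "(int \<Rightarrow> nat) \<Rightarrow> (int \<Rightarrow> nat) \<Rightarrow> bool" where
  "doubly_asymp \<alpha> \<beta> = (pos_asymp \<alpha> \<beta> \<and> neg_asymp \<alpha> \<beta>)"

end

theory Submission
  imports Defs
begin

(*
  Under the Keane condition the exchange T has no periodic points, and a piecewise translation
  without periodic points is determined by one half of its itinerary: two points with the same
  future (or past) symbols would bound an interval of points moving in parallel, which forces a
  recurrence and hence a periodic point. A point of X is a limit of itineraries of regular points,
  hence of the form I(x) or I~(x), the itineraries of x for T and for its left-continuous dual.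
  So two distinct asymptotic points of X are, up to a shift, the two codings of a single point,
  and these split precisely where its orbit meets a discontinuity: going backwards from a point
  of D^tau for positive asymptoticity, forwards from a point of D for negative asymptoticity.
  If tau(j+1) = tau(j)+1, the codings of b_j differ only at time 0, which gives a doubly
  asymptotic pair. If tau is fully split, the two preimages of b^tau_m differ, and if the
  codings of b^tau_m agreed in the far past, the forward orbits of a common point under T and
  its dual would lead to both; they separate at a point of D, which the Keane condition forbids.
*)

section \<open>Piecewise translations of the unit interval\<close>

lemma funpow_closed: "(\<And>z. z \<in> S \<Longrightarrow> f z \<in> S) \<Longrightarrow> x \<in> S \<Longrightarrow> (f ^^ j) x \<in> S"
  by (induction j) auto

lemma unit_seq_close_terms:
  fixes P :: "nat \<Rightarrow> real" assumes P: "\<And>k. P k \<in> {0..1}" and L: "L > 0"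
  shows "\<exists>k1 k2. k1 < k2 \<and> \<bar>P k1 - P k2\<bar> < L"
proof -
  obtain l r where r: "strict_mono r" "(P \<circ> r) \<longlonglongrightarrow> l"
    using seq_compactE[OF compact_imp_seq_compact[OF compact_Icc], of P 0 1] P by metis
  have "Cauchy (P \<circ> r)" using r(2) by (rule LIMSEQ_imp_Cauchy)
  then obtain M where "\<forall>m\<ge>M. \<forall>n\<ge>M. dist ((P \<circ> r) m) ((P \<circ> r) n) < L"
    using L unfolding Cauchy_def by presburger
  then have "\<bar>P (r M) - P (r (Suc M))\<bar> < L" by (simp add: dist_real_def)
  moreover have "r M < r (Suc M)" using r(1) by (simp add: strict_mono_Suc_iff)
  ultimately show ?thesis by blast
qed

lemma first_divergence:
  assumes "(f ^^ M) w \<noteq> (g ^^ M) w"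
  shows "\<exists>j<M. (f ^^ j) w = (g ^^ j) w \<and> f ((f ^^ j) w) \<noteq> g ((f ^^ j) w)"
proof -
  define j0 where "j0 = (LEAST j. (f ^^ j) w \<noteq> (g ^^ j) w)"
  have j0: "(f ^^ j0) w \<noteq> (g ^^ j0) w" "j0 \<le> M"
    using LeastI[of "\<lambda>j. (f ^^ j) w \<noteq> (g ^^ j) w" M] Least_le[of "\<lambda>j. (f ^^ j) w \<noteq> (g ^^ j) w" M] assms
    by (auto simp: j0_def)
  then obtain j where j: "j0 = Suc j" by (cases j0) auto
  have "(f ^^ j) w = (g ^^ j) w"
    using not_less_Least[of j "\<lambda>j. (f ^^ j) w \<noteq> (g ^^ j) w"] j by (simp add: j0_def)
  then show ?thesis using j0 j by (intro exI[of _ j]) auto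
qed

locale pw_translation =
  fixes S :: "real set" and f :: "real \<Rightarrow> real" and \<iota> :: "real \<Rightarrow> nat" and s :: "nat \<Rightarrow> real"
  assumes maps_into: "z \<in> S \<Longrightarrow> f z \<in> S"
    and translation: "z \<in> S \<Longrightarrow> f z = z + s (\<iota> z)"
begin

lemma funpow_in: "x \<in> S \<Longrightarrow> (f ^^ j) x \<in> S"
  using funpow_closed[of S f] maps_into by blast

lemma funpow_Suc_translation: "x \<in> S \<Longrightarrow> (f ^^ Suc j) x = (f ^^ j) x + s (\<iota> ((f ^^ j) x))"
  using translation[OF funpow_in] by simp

end

lemma displacement_eq:
  assumes f: "pw_translation Sf f \<iota>f s" and g: "pw_translation Sg g \<iota>g s"
    and x: "x \<in> Sf" and y: "y \<in> Sg"
    and same: "\<And>i. i < k \<Longrightarrow> \<iota>f ((f ^^ i) x) = \<iota>g ((g ^^ i) y)"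
  shows "(f ^^ k) x - x = (g ^^ k) y - y"
  using same
proof (induction k)
  case (Suc k)
  then show ?case
    using pw_translation.funpow_Suc_translation[OF f x, of k]
      pw_translation.funpow_Suc_translation[OF g y, of k] by simp
qed simp

locale unit_pw_translation = pw_translation +
  assumes subset_unit: "S \<subseteq> {0..1}"
    and cells_convex: "\<And>u v w. u \<in> S \<Longrightarrow> w \<in> S \<Longrightarrow> u \<le> v \<Longrightarrow> v \<le> w \<Longrightarrow> \<iota> u = \<iota> w
      \<Longrightarrow> v \<in> S \<and> \<iota> v = \<iota> w"
begin

lemma displacement_eq_self:
  assumes "x \<in> S" "y \<in> S" "\<And>j. \<iota> ((f ^^ j) x) = \<iota> ((f ^^ j) y)"
  shows "(f ^^ k) x - x = (f ^^ k) y - y"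
  using displacement_eq[OF pw_translation_axioms pw_translation_axioms assms(1,2)] assms(3) by blast

lemma itinerary_between:
  assumes u: "u \<in> S" and w: "w \<in> S" and uz: "u \<le> z" and zw: "z \<le> w"
    and same: "\<And>j. \<iota> ((f ^^ j) u) = \<iota> ((f ^^ j) w)"
  shows "(f ^^ j) z \<in> S \<and> (f ^^ j) z = z + ((f ^^ j) u - u) \<and> \<iota> ((f ^^ j) z) = \<iota> ((f ^^ j) u)"
proof (induction j)
  case 0
  then show ?case using cells_convex[OF u w uz zw] same[of 0] by simp
next
  case (Suc j)
  have IH: "(f ^^ j) z \<in> S" "(f ^^ j) z = z + ((f ^^ j) u - u)" "\<iota> ((f ^^ j) z) = \<iota> ((f ^^ j) u)"
    using Suc by auto
  have "(f ^^ Suc j) z = (f ^^ j) z + s (\<iota> ((f ^^ j) z))" using translation[OF IH(1)] by simp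
  also have "\<dots> = z + ((f ^^ Suc j) u - u)" using IH(2,3) funpow_Suc_translation[OF u, of j] by simp
  finally have e1: "(f ^^ Suc j) z = z + ((f ^^ Suc j) u - u)" .
  have e2: "(f ^^ Suc j) w - w = (f ^^ Suc j) u - u"
    using displacement_eq_self[OF u w same, of "Suc j"] by linarith
  have "(f ^^ Suc j) z \<in> S \<and> \<iota> ((f ^^ Suc j) z) = \<iota> ((f ^^ Suc j) w)"
    by (rule cells_convex[OF funpow_in[OF u, of "Suc j"] funpow_in[OF w, of "Suc j"]])
      (use e1 e2 uz zw same[of "Suc j"] in \<open>auto simp del: funpow.simps\<close>)
  then show ?case using e1 same[of "Suc j"] by simp
qed

text \<open>Otherwise the points \<open>w + m ((f ^^ p) w - w)\<close>, \<open>m \<in> \<nat>\<close>, would all share the itinerary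
  of \<open>w\<close> and lie in the bounded set \<open>S\<close>.\<close>

lemma periodic_if_itinerary_periodic:
  assumes w: "w \<in> S" and per: "\<And>j. \<iota> ((f ^^ (j + p)) w) = \<iota> ((f ^^ j) w)"
  shows "(f ^^ p) w = w"
proof -
  define c where "c = (f ^^ p) w - w"
  have M: "w + real m * c \<in> S \<and> (\<forall>j. \<iota> ((f ^^ j) (w + real m * c)) = \<iota> ((f ^^ j) w))" for m
  proof (induction m)
    case (Suc m)
    define z where "z = w + real m * c"
    have zS: "z \<in> S" and zi: "\<And>j. \<iota> ((f ^^ j) z) = \<iota> ((f ^^ j) w)"
      using Suc by (auto simp: z_def)
    have "(f ^^ p) z - z = c" using displacement_eq_self[OF zS w zi] by (simp add: c_def)
    then have eq: "w + real (Suc m) * c = (f ^^ p) z" by (simp add: z_def algebra_simps)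
    have "\<iota> ((f ^^ j) ((f ^^ p) z)) = \<iota> ((f ^^ j) w)" for j
      using zi[of "j + p"] per[of j] by (simp add: funpow_add)
    then show ?case using eq funpow_in[OF zS] by simp
  qed (use w in simp)
  have "c = 0"
  proof (rule ccontr)
    assume "c \<noteq> 0"
    then obtain m :: nat where m: "1 < real m * \<bar>c\<bar>" using ex_less_of_nat_mult[of "\<bar>c\<bar>" 1] by auto
    have "w + real m * c \<in> {0..1}" "w \<in> {0..1}" using M[of m] subset_unit w by auto
    then have "\<bar>real m * c\<bar> \<le> 1" by (auto simp: abs_le_iff)
    then show False using m by (simp add: abs_mult)
  qed
  then show ?thesis by (simp add: c_def)
qed

text \<open>Pigeonhole: two points \<open>u < w\<close> with a common itinerary bound a cylinder of length
  \<open>w - u\<close>, and two orbit points of \<open>u\<close> closer than that share their future itinerary.\<close>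

lemma itinerary_recurs:
  assumes u: "u \<in> S" and w: "w \<in> S" and uw: "u < w"
    and same: "\<And>j. \<iota> ((f ^^ j) u) = \<iota> ((f ^^ j) w)"
  shows "\<exists>k k'. k < k' \<and> (\<forall>j. \<iota> ((f ^^ (j + k)) u) = \<iota> ((f ^^ (j + k')) u))"
proof -
  define P where "P k = (f ^^ k) u" for k
  have shift: "\<iota> ((f ^^ (j + K)) u) = \<iota> ((f ^^ (j + K')) u)"
    if le: "P K \<le> P K'" and close: "P K' < P K + (w - u)" for K K' j
  proof -
    define z where "z = P K' - (P K - u)"
    have z: "u \<le> z" "z \<le> w" using le close by (auto simp: z_def)
    have zK: "(f ^^ K) z = P K'"
      using itinerary_between[OF u w z same, of K] by (simp add: z_def P_def)
    have "\<iota> ((f ^^ (j + K)) u) = \<iota> ((f ^^ (j + K)) z)"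
      by (rule sym) (use itinerary_between[OF u w z same, of "j + K"] in blast)
    also have "\<dots> = \<iota> ((f ^^ (j + K')) u)" using zK by (simp add: funpow_add P_def)
    finally show ?thesis .
  qed
  obtain k1 k2 where k: "k1 < k2" "\<bar>P k1 - P k2\<bar> < w - u"
    using unit_seq_close_terms[of P "w - u"] subset_unit funpow_in[OF u] uw by (force simp: P_def)
  then have "\<forall>j. \<iota> ((f ^^ (j + k1)) u) = \<iota> ((f ^^ (j + k2)) u)"
    using shift[of k1 k2] shift[of k2 k1] by (cases "P k1 \<le> P k2") auto
  then show ?thesis using k(1) by blast
qed

lemma itinerary_inj:
  assumes aperiodic: "\<And>z p. z \<in> S \<Longrightarrow> 0 < p \<Longrightarrow> (f ^^ p) z \<noteq> z"
    and x: "x \<in> S" and y: "y \<in> S" and same: "\<And>j. \<iota> ((f ^^ j) x) = \<iota> ((f ^^ j) y)"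
  shows "x = y"
proof -
  have no_pair: False if u: "u \<in> S" and w: "w \<in> S" and uw: "u < w"
    and sm: "\<And>j. \<iota> ((f ^^ j) u) = \<iota> ((f ^^ j) w)" for u w
  proof -
    obtain k k' where k: "k < k'" "\<And>j. \<iota> ((f ^^ (j + k)) u) = \<iota> ((f ^^ (j + k')) u)"
      using itinerary_recurs[OF u w uw sm] by blast
    define q where "q = (f ^^ k) u"
    have "\<iota> ((f ^^ (j + (k' - k))) q) = \<iota> ((f ^^ j) q)" for j
    proof -
      have "(f ^^ (j + (k' - k))) q = (f ^^ (j + (k' - k) + k)) u"
        by (simp only: q_def funpow_add o_apply)
      also have "j + (k' - k) + k = j + k'" using k(1) by simp
      finally show ?thesis using k(2)[of j] by (simp add: q_def funpow_add)
    qed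
    then have "(f ^^ (k' - k)) q = q"
      by (rule periodic_if_itinerary_periodic[OF funpow_in[OF u, of k, folded q_def]])
    then show False using aperiodic[OF funpow_in[OF u], of "k' - k" k] k(1) by (simp add: q_def)
  qed
  have "\<And>j. \<iota> ((f ^^ j) y) = \<iota> ((f ^^ j) x)" using same by simp
  then show ?thesis
    using no_pair[OF x y _ same] no_pair[OF y x] by (cases x y rule: linorder_cases) auto
qed

end

lemma perturbed_orbit:
  fixes E :: "real \<Rightarrow> real set"
  assumes f: "pw_translation Sf f \<iota>f s" and g: "pw_translation Sg g \<iota>g s"
    and near: "\<And>v. v \<in> Sg \<Longrightarrow> \<exists>\<delta>>0. \<forall>e\<in>E \<delta>. v + e \<in> Sf \<and> \<iota>f (v + e) = \<iota>g v"
    and E_mono: "\<And>\<delta> \<delta>' e. \<delta> \<le> \<delta>' \<Longrightarrow> e \<in> E \<delta> \<Longrightarrow> e \<in> E \<delta>'"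
    and v: "v \<in> Sg"
  shows "\<exists>\<delta>>0. \<forall>e\<in>E \<delta>. \<forall>j\<le>p. (f ^^ j) (v + e) = (g ^^ j) v + e \<and> (f ^^ j) (v + e) \<in> Sf
    \<and> \<iota>f ((f ^^ j) (v + e)) = \<iota>g ((g ^^ j) v)"
proof (induction p)
  case 0
  then show ?case using near[OF v] by auto
next
  case (Suc p)
  obtain \<delta>1 where \<delta>1: "\<delta>1 > 0" "\<forall>e\<in>E \<delta>1. \<forall>j\<le>p. (f ^^ j) (v + e) = (g ^^ j) v + e
      \<and> (f ^^ j) (v + e) \<in> Sf \<and> \<iota>f ((f ^^ j) (v + e)) = \<iota>g ((g ^^ j) v)"
    using Suc by blast
  obtain \<delta>2 where \<delta>2: "\<delta>2 > 0" "\<forall>e\<in>E \<delta>2. (g ^^ Suc p) v + e \<in> Sf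
      \<and> \<iota>f ((g ^^ Suc p) v + e) = \<iota>g ((g ^^ Suc p) v)"
    using near[OF pw_translation.funpow_in[OF g v, of "Suc p"]] by blast
  have step: "(f ^^ j) (v + e) = (g ^^ j) v + e \<and> (f ^^ j) (v + e) \<in> Sf \<and> \<iota>f ((f ^^ j) (v + e)) = \<iota>g ((g ^^ j) v)"
    if e: "e \<in> E (min \<delta>1 \<delta>2)" and j: "j \<le> Suc p" for e j
  proof (cases "j \<le> p")
    case True
    moreover have "e \<in> E \<delta>1" using E_mono[OF _ e] by simp
    ultimately show ?thesis using \<delta>1(2) by blast
  next
    case False
    then have j: "j = Suc p" using j by simp
    have "e \<in> E \<delta>1" using E_mono[OF _ e] by simp
    then have IH: "(f ^^ p) (v + e) = (g ^^ p) v + e" "(g ^^ p) v + e \<in> Sf"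
      "\<iota>f ((g ^^ p) v + e) = \<iota>g ((g ^^ p) v)"
      using bspec[OF \<delta>1(2), rule_format, OF _ order_refl] by force+
    have "(f ^^ Suc p) (v + e) = (g ^^ Suc p) v + e"
      using IH(1,3) pw_translation.translation[OF f IH(2)] pw_translation.funpow_Suc_translation[OF g v, of p]
      by simp
    then show ?thesis using \<delta>2(2) E_mono[OF _ e, of \<delta>2] j by simp
  qed
  show ?case
  proof (intro exI[of _ "min \<delta>1 \<delta>2"] conjI)
    show "0 < min \<delta>1 \<delta>2" using \<delta>1(1) \<delta>2(1) by simp
  qed (use step in blast)
qed

locale interval_translation = pw_translation +
  fixes l r :: "nat \<Rightarrow> real"
  assumes cell_bounds: "z \<in> S \<Longrightarrow> l (\<iota> z) \<le> z \<and> z < r (\<iota> z)"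
    and cell_fill: "i \<in> \<iota> ` S \<Longrightarrow> l i \<le> z \<Longrightarrow> z < r i \<Longrightarrow> z \<in> S \<and> \<iota> z = i"
begin

lemma left_closed_cells_convex:
  assumes "u \<in> S" "w \<in> S" "u \<le> v" "v \<le> w" "\<iota> u = \<iota> w"
  shows "v \<in> S \<and> \<iota> v = \<iota> w"
  using cell_fill[of "\<iota> w" v] cell_bounds[of u] cell_bounds[of w] assms by force

lemma shadows_orbit:
  assumes x: "x \<in> S"
    and in_cells: "\<And>i. i < k \<Longrightarrow>
      l (\<iota> ((f ^^ i) x)) \<le> z + ((f ^^ i) x - x) \<and> z + ((f ^^ i) x - x) < r (\<iota> ((f ^^ i) x))"
  shows "i < k \<Longrightarrow> (f ^^ i) z = z + ((f ^^ i) x - x) \<and> (f ^^ i) z \<in> S \<and> \<iota> ((f ^^ i) z) = \<iota> ((f ^^ i) x)"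
proof (induction i)
  case 0
  then show ?case using cell_fill[of "\<iota> x" z] in_cells[of 0] x by simp
next
  case (Suc i)
  then have IH: "(f ^^ i) z = z + ((f ^^ i) x - x)" "(f ^^ i) z \<in> S" "\<iota> ((f ^^ i) z) = \<iota> ((f ^^ i) x)"
    by auto
  have "(f ^^ Suc i) z = (f ^^ i) z + s (\<iota> ((f ^^ i) z))" using translation[OF IH(2)] by simp
  also have "\<dots> = z + ((f ^^ Suc i) x - x)" using IH(1,3) funpow_Suc_translation[OF x, of i] by simp
  finally have e: "(f ^^ Suc i) z = z + ((f ^^ Suc i) x - x)" .
  have "\<iota> ((f ^^ Suc i) x) \<in> \<iota> ` S" using funpow_in[OF x] by blast
  then show ?case
    using cell_fill[of "\<iota> ((f ^^ Suc i) x)" "(f ^^ Suc i) z"] in_cells[OF Suc.prems] e by simp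
qed

text \<open>The points sharing the first \<open>p\<close> symbols of the itinerary of a \<open>p\<close>-periodic point
  form an interval of \<open>p\<close>-periodic points; its left end is periodic too, and its orbit must
  meet the left end of some cell, since otherwise the interval could be extended to the left.\<close>

lemma periodic_orbit_hits_left_end:
  assumes z: "z \<in> S" and p: "0 < p" and per: "(f ^^ p) z = z"
  shows "\<exists>u\<in>S. (f ^^ p) u = u \<and> (\<exists>j<p. (f ^^ j) u = l (\<iota> ((f ^^ j) u)))"
proof -
  define c where "c j = (f ^^ j) z - z" for j
  define C where "C = {w \<in> S. \<forall>j<p. \<iota> ((f ^^ j) w) = \<iota> ((f ^^ j) z)}"
  have disp: "(f ^^ j) w = w + c j" if w: "w \<in> C" and j: "j \<le> p" for w j
    using displacement_eq[OF pw_translation_axioms pw_translation_axioms, of w z j] w j z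
    by (simp add: C_def c_def)
  have cyl: "w \<in> C" if "\<And>j. j < p \<Longrightarrow> l (\<iota> ((f ^^ j) z)) \<le> w + c j \<and> w + c j < r (\<iota> ((f ^^ j) z))" for w
    using shadows_orbit[OF z, of p w] that p unfolding C_def c_def by force
  have lo: "l (\<iota> ((f ^^ j) z)) \<le> w + c j" if w: "w \<in> C" and j: "j < p" for w j
  proof -
    from that have wS: "w \<in> S" and wi: "\<iota> ((f ^^ j) w) = \<iota> ((f ^^ j) z)" by (auto simp: C_def)
    have "l (\<iota> ((f ^^ j) z)) \<le> (f ^^ j) w" using cell_bounds[OF funpow_in[OF wS, of j]] wi by simp
    then show ?thesis using disp[OF w] j by simp
  qed
  have zC: "z \<in> C" using z by (simp add: C_def)
  have bdd: "bdd_below C" using lo[of _ 0] p by (intro bdd_belowI[of _ "l (\<iota> z)"]) (simp add: c_def)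
  define u where "u = Inf C"
  have u_lo: "l (\<iota> ((f ^^ j) z)) \<le> u + c j" if "j < p" for j
  proof -
    have "l (\<iota> ((f ^^ j) z)) - c j \<le> u"
      unfolding u_def using zC lo[OF _ that] by (intro cInf_greatest) (auto simp: algebra_simps)
    then show ?thesis by simp
  qed
  have u_hi: "u + c j < r (\<iota> ((f ^^ j) z))" if "j < p" for j
    using cell_bounds[OF funpow_in[OF z, of j]] cInf_lower[OF zC bdd] by (simp add: u_def c_def)
  have uC: "u \<in> C" using cyl u_lo u_hi by blast
  have "\<exists>j<p. (f ^^ j) u = l (\<iota> ((f ^^ j) u))"
  proof (rule ccontr)
    assume "\<not> ?thesis"
    then have gt: "l (\<iota> ((f ^^ j) z)) < u + c j" if "j < p" for j
      using u_lo[OF that] disp[OF uC, of j] uC that by (force simp: C_def)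
    define \<delta> where "\<delta> = Min ((\<lambda>j. u + c j - l (\<iota> ((f ^^ j) z))) ` {..<p})"
    have \<delta>: "0 < \<delta>" "\<And>j. j < p \<Longrightarrow> \<delta> \<le> u + c j - l (\<iota> ((f ^^ j) z))"
      unfolding \<delta>_def using p gt by (subst Min_gr_iff; auto) (intro Min_le; auto)
    have "u - \<delta> / 2 \<in> C"
      by (rule cyl) (use \<delta> u_hi in \<open>fastforce\<close>)
    then show False using cInf_lower[OF _ bdd] \<delta>(1) unfolding u_def by fastforce
  qed
  moreover have "(f ^^ p) u = u" using disp[OF uC, of p] per by (simp add: c_def)
  ultimately show ?thesis using uC by (auto simp: C_def)
qed

lemma orbit_right_stable:
  assumes v: "v \<in> S"
  shows "\<exists>\<delta>>0. \<forall>e\<in>{0..<\<delta>}. \<forall>j\<le>p. (f ^^ j) (v + e) = (f ^^ j) v + e \<and> (f ^^ j) (v + e) \<in> S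
    \<and> \<iota> ((f ^^ j) (v + e)) = \<iota> ((f ^^ j) v)"
proof (rule perturbed_orbit[OF pw_translation_axioms pw_translation_axioms _ _ v])
  fix w assume w: "w \<in> S"
  have "w + e \<in> S \<and> \<iota> (w + e) = \<iota> w" if "e \<in> {0..<r (\<iota> w) - w}" for e
    using cell_fill[of "\<iota> w" "w + e"] cell_bounds[OF w] w that by auto
  moreover have "0 < r (\<iota> w) - w" using cell_bounds[OF w] by simp
  ultimately show "\<exists>\<delta>>0. \<forall>e\<in>{0..<\<delta>}. w + e \<in> S \<and> \<iota> (w + e) = \<iota> w" by blast
qed auto

lemma orbit_left_follows_dual:
  assumes g: "pw_translation Sg g \<iota>g s"
    and g_cells: "\<And>z. z \<in> Sg \<Longrightarrow> l (\<iota>g z) < z \<and> z \<le> r (\<iota>g z)"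
    and g_idx: "\<And>z. z \<in> Sg \<Longrightarrow> \<iota>g z \<in> \<iota> ` S"
    and v: "v \<in> Sg"
  shows "\<exists>\<delta>>0. \<forall>e\<in>{-\<delta><..<0}. \<forall>j\<le>p. (f ^^ j) (v + e) = (g ^^ j) v + e \<and> (f ^^ j) (v + e) \<in> S
    \<and> \<iota> ((f ^^ j) (v + e)) = \<iota>g ((g ^^ j) v)"
proof (rule perturbed_orbit[OF pw_translation_axioms g _ _ v])
  fix w assume w: "w \<in> Sg"
  have "w + e \<in> S \<and> \<iota> (w + e) = \<iota>g w" if "e \<in> {- (w - l (\<iota>g w))<..<0}" for e
    using cell_fill[OF g_idx[OF w], of "w + e"] g_cells[OF w] that by auto
  moreover have "0 < w - l (\<iota>g w)" using g_cells[OF w] by simp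
  ultimately show "\<exists>\<delta>>0. \<forall>e\<in>{-\<delta><..<0}. w + e \<in> S \<and> \<iota> (w + e) = \<iota>g w" by blast
qed auto

text \<open>Otherwise the midpoint of \<open>x\<close> and \<open>y\<close> would share the itinerary of \<open>x\<close>.\<close>

lemma eq_if_same_itinerary_as_dual:
  assumes g: "pw_translation Sg g \<iota>g s"
    and g_cells: "\<And>z. z \<in> Sg \<Longrightarrow> l (\<iota>g z) < z \<and> z \<le> r (\<iota>g z)"
    and inj: "\<And>x y. x \<in> S \<Longrightarrow> y \<in> S \<Longrightarrow> (\<And>j. \<iota> ((f ^^ j) x) = \<iota> ((f ^^ j) y)) \<Longrightarrow> x = y"
    and x: "x \<in> S" and y: "y \<in> Sg" and same: "\<And>j. \<iota> ((f ^^ j) x) = \<iota>g ((g ^^ j) y)"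
  shows "x = y"
proof (rule ccontr)
  assume ne: "x \<noteq> y"
  define c where "c j = (f ^^ j) x - x" for j
  have gc: "(g ^^ j) y = y + c j" for j
    using displacement_eq[OF pw_translation_axioms g x y same] by (simp add: c_def)
  have bnd: "l (\<iota> ((f ^^ j) x)) \<le> x + c j" "x + c j < r (\<iota> ((f ^^ j) x))"
    "l (\<iota> ((f ^^ j) x)) < y + c j" "y + c j \<le> r (\<iota> ((f ^^ j) x))" for j
    using cell_bounds[OF funpow_in[OF x, of j]] g_cells[OF pw_translation.funpow_in[OF g y, of j]]
      gc[of j] same[of j] by (auto simp: c_def)
  define m where "m = (x + y) / 2"
  have hm: "l (\<iota> ((f ^^ j) x)) \<le> m + c j \<and> m + c j < r (\<iota> ((f ^^ j) x))" for j
    using bnd[of j] ne unfolding m_def by (cases "x < y") (auto simp: field_simps)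
  have m: "(f ^^ j) m \<in> S \<and> \<iota> ((f ^^ j) x) = \<iota> ((f ^^ j) m)" for j
  proof -
    have "(f ^^ j) m = m + c j \<and> (f ^^ j) m \<in> S \<and> \<iota> ((f ^^ j) m) = \<iota> ((f ^^ j) x)"
      unfolding c_def by (rule shadows_orbit[OF x, of "Suc j"]) (use hm in \<open>auto simp: c_def\<close>)
    then show ?thesis by auto
  qed
  have "x = m" by (rule inj[OF x]) (use m[of 0] m in auto)
  then show False using ne by (simp add: m_def field_simps)
qed

end

lemma incr_less:
  assumes "\<And>i. i < n \<Longrightarrow> (c :: nat \<Rightarrow> real) i < c (Suc i)" and "i < j" "j \<le> n"
  shows "c i < c j"
  using assms(2,3)
proof (induction j)
  case (Suc j)
  then show ?case using assms(1)[of j] by (cases "i = j") auto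
qed simp

lemma incr_le:
  assumes "\<And>i. i < n \<Longrightarrow> (c :: nat \<Rightarrow> real) i < c (Suc i)" and "i \<le> j" "j \<le> n"
  shows "c i \<le> c j"
  using incr_less[of n c, OF assms(1)] assms(2,3) by (cases "i = j") (auto simp: less_imp_le)

lemma incr_cell_ex:
  assumes "\<And>i. i < n \<Longrightarrow> (c :: nat \<Rightarrow> real) i < c (Suc i)" and "c 0 = 0" "c n = 1" "0 \<le> x" "x < 1"
  shows "\<exists>i\<in>{1..n}. c (i - 1) \<le> x \<and> x < c i"
proof -
  define i where "i = (LEAST i. x < c i)"
  have ex: "x < c n" using assms by simp
  have xi: "x < c i" unfolding i_def using ex by (rule LeastI)
  have "i \<le> n" unfolding i_def using ex by (rule Least_le)
  moreover have "i \<noteq> 0"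
  proof
    assume "i = 0"
    then show False using xi assms by simp
  qed
  moreover have "\<not> x < c (i - 1)"
    using not_less_Least[of "i - 1" "\<lambda>i. x < c i"] \<open>i \<noteq> 0\<close> unfolding i_def by simp
  ultimately show ?thesis using xi by (intro bexI[of _ i]) auto
qed

lemma incr_cell_d_ex:
  assumes "\<And>i. i < n \<Longrightarrow> (c :: nat \<Rightarrow> real) i < c (Suc i)" and "c 0 = 0" "c n = 1" "0 < x" "x \<le> 1"
  shows "\<exists>i\<in>{1..n}. c (i - 1) < x \<and> x \<le> c i"
proof -
  define i where "i = (LEAST i. x \<le> c i)"
  have ex: "x \<le> c n" using assms by simp
  have xi: "x \<le> c i" unfolding i_def using ex by (rule LeastI)
  have "i \<le> n" unfolding i_def using ex by (rule Least_le)
  moreover have "i \<noteq> 0"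
  proof
    assume "i = 0"
    then show False using xi assms by simp
  qed
  moreover have "\<not> x \<le> c (i - 1)"
    using not_less_Least[of "i - 1" "\<lambda>i. x \<le> c i"] \<open>i \<noteq> 0\<close> unfolding i_def by simp
  ultimately show ?thesis using xi by (intro bexI[of _ i]) auto
qed

lemma incr_cell_unique:
  assumes m: "\<And>i. i < n \<Longrightarrow> (c :: nat \<Rightarrow> real) i < c (Suc i)"
    and i: "i \<in> {1..n}" "c (i - 1) \<le> x" "x < c i" and j: "j \<in> {1..n}" "c (j - 1) \<le> x" "x < c j"
  shows "i = j"
proof (rule ccontr)
  assume "i \<noteq> j"
  then consider "i < j" | "j < i" by linarith
  then show False
  proof cases
    case 1
    then have "c i \<le> c (j - 1)" using incr_le[of n c, OF m, of i "j - 1"] j by auto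
    then show False using i j by simp
  next
    case 2
    then have "c j \<le> c (i - 1)" using incr_le[of n c, OF m, of j "i - 1"] i by auto
    then show False using i j by simp
  qed
qed

lemma incr_cell_d_unique:
  assumes m: "\<And>i. i < n \<Longrightarrow> (c :: nat \<Rightarrow> real) i < c (Suc i)"
    and i: "i \<in> {1..n}" "c (i - 1) < x" "x \<le> c i" and j: "j \<in> {1..n}" "c (j - 1) < x" "x \<le> c j"
  shows "i = j"
proof (rule ccontr)
  assume "i \<noteq> j"
  then consider "i < j" | "j < i" by linarith
  then show False
  proof cases
    case 1
    then have "c i \<le> c (j - 1)" using incr_le[of n c, OF m, of i "j - 1"] j by auto
    then show False using i j by simp
  next
    case 2
    then have "c j \<le> c (i - 1)" using incr_le[of n c, OF m, of j "i - 1"] i by auto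
    then show False using i j by simp
  qed
qed

definition int_iter :: "('a \<Rightarrow> 'a) \<Rightarrow> 'a set \<Rightarrow> int \<Rightarrow> 'a \<Rightarrow> 'a" where
  "int_iter g A k = (if 0 \<le> k then g ^^ nat k else inv_into A g ^^ nat (- k))"

lemma int_iter_0 [simp]: "int_iter g A 0 = id"
  by (simp add: int_iter_def)

lemma int_iter_of_nat: "int_iter g A (int m) = g ^^ m"
  by (simp add: int_iter_def)

lemma int_iter_neg: "int_iter g A (- int m) = inv_into A g ^^ m"
  by (cases "m = 0") (auto simp: int_iter_def)

context
  fixes g :: "'a \<Rightarrow> 'a" and A :: "'a set"
  assumes bij: "bij_betw g A A"
begin

lemma inv_into_in: "z \<in> A \<Longrightarrow> inv_into A g z \<in> A"
  using bij bij_betw_inv_into bij_betwE by blast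

lemma int_iter_in: "x \<in> A \<Longrightarrow> int_iter g A k x \<in> A"
proof -
  assume x: "x \<in> A"
  have "\<And>z. z \<in> A \<Longrightarrow> g z \<in> A" using bij bij_betwE by blast
  then show ?thesis
    unfolding int_iter_def
      using funpow_closed[of A g, OF _ x] funpow_closed[of A "inv_into A g", OF inv_into_in x]
    by auto
qed

lemma int_iter_add1: "x \<in> A \<Longrightarrow> int_iter g A (k + 1) x = g (int_iter g A k x)"
proof (cases "0 \<le> k")
  case True
  then have "nat (k + 1) = Suc (nat k)" by simp
  then show ?thesis using True by (simp add: int_iter_def)
next
  case False
  assume x: "x \<in> A"
  define m where "m = nat (- k) - 1"
  have m: "k = - int (Suc m)" using False unfolding m_def by simp
  have "g (inv_into A g ((inv_into A g ^^ m) x)) = (inv_into A g ^^ m) x"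
    using funpow_closed[of A "inv_into A g", OF inv_into_in x] bij by (simp add: bij_betw_def f_inv_into_f)
  moreover have "nat (- k) = Suc m" "nat (- (k + 1)) = m" "0 \<le> k + 1 \<longleftrightarrow> m = 0" using m by auto
  ultimately show ?thesis using False by (auto simp: int_iter_def)
qed

lemma int_iter_diff1: "x \<in> A \<Longrightarrow> int_iter g A (k - 1) x = inv_into A g (int_iter g A k x)"
  using int_iter_add1[of x "k - 1"] int_iter_in[of x "k - 1"] bij
  by (simp add: bij_betw_def inv_into_f_f)

lemma int_iter_add: "x \<in> A \<Longrightarrow> int_iter g A (j + k) x = int_iter g A j (int_iter g A k x)"
proof (induction j rule: int_induct[where k = 0])
  case (step1 i)
  have "int_iter g A (i + 1 + k) x = int_iter g A ((i + k) + 1) x" by (simp add: ac_simps)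
  also have "\<dots> = g (int_iter g A i (int_iter g A k x))"
    using int_iter_add1[OF step1.prems] step1 by simp
  also have "\<dots> = int_iter g A (i + 1) (int_iter g A k x)"
    using int_iter_add1[OF int_iter_in[OF step1.prems]] by simp
  finally show ?case .
next
  case (step2 i)
  have "int_iter g A (i - 1 + k) x = int_iter g A ((i + k) - 1) x" by (simp add: algebra_simps)
  also have "\<dots> = inv_into A g (int_iter g A i (int_iter g A k x))"
    using int_iter_diff1[OF step2.prems] step2 by simp
  also have "\<dots> = int_iter g A (i - 1) (int_iter g A k x)"
    using int_iter_diff1[OF int_iter_in[OF step2.prems]] by simp
  finally show ?case .
qed simp

end

lemma funpow_cong_on:
  assumes "\<And>z. z \<in> A \<Longrightarrow> h z = h' z" "\<And>z. z \<in> A \<Longrightarrow> h z \<in> A" "x \<in> A"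
  shows "(h ^^ m) x = (h' ^^ m) x"
  using assms by (induction m) (auto intro: funpow_closed)

lemma int_neg_eq: "(j :: int) < 0 \<Longrightarrow> \<exists>m. j = - int (Suc m)"
  by (rule exI[of _ "nat (- j) - 1"]) simp

lemma shiftk_inv: "shiftk (- c) (shiftk c \<alpha>) = \<alpha>"
  by (simp add: shiftk_def)

lemma tendsto_int_nat_iff:
  "((f :: 'x \<Rightarrow> int \<Rightarrow> nat) \<longlongrightarrow> l) F \<longleftrightarrow> (\<forall>i. eventually (\<lambda>c. f c i = l i) F)"
proof -
  have nat: "((g :: 'x \<Rightarrow> nat) \<longlongrightarrow> c) F \<longleftrightarrow> eventually (\<lambda>x. g x = c) F" for g c
    using topological_tendstoD[of g c F "{c}"] by (auto simp: open_discrete tendsto_eventually)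
  show ?thesis
    using limitin_componentwise[of "\<lambda>i. euclidean" UNIV f l F]
    by (simp add: euclidean_product_topology nat)
qed

lemma tendsto_int_nat_unique:
  assumes "F \<noteq> bot" "((f :: 'x \<Rightarrow> int \<Rightarrow> nat) \<longlongrightarrow> \<alpha>) F" "(f \<longlongrightarrow> \<beta>) F"
  shows "\<alpha> = \<beta>"
proof
  fix i
  have "eventually (\<lambda>c. f c i = \<alpha> i) F" "eventually (\<lambda>c. f c i = \<beta> i) F"
    using assms(2,3) unfolding tendsto_int_nat_iff by blast+
  then have "eventually (\<lambda>c. \<alpha> i = \<beta> i) F" by eventually_elim simp
  then show "\<alpha> i = \<beta> i" using assms(1) by (simp add: eventually_const_iff)
qed

lemma shiftk_last_disagreement:
  fixes \<alpha> \<beta> :: "int \<Rightarrow> nat"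
  assumes ne: "\<alpha> \<noteq> \<beta>" and agree: "\<And>j. N \<le> j \<Longrightarrow> \<alpha> j = \<beta> j"
  shows "\<exists>k. shiftk k \<alpha> (- 1) \<noteq> shiftk k \<beta> (- 1) \<and> (\<forall>j\<ge>0. shiftk k \<alpha> j = shiftk k \<beta> j)"
proof -
  obtain j where j: "\<alpha> j \<noteq> \<beta> j" using ne by auto
  then have "j < N" using agree[of j] by (metis not_le)
  then have ex: "\<exists>t::nat. \<alpha> (N - 1 - int t) \<noteq> \<beta> (N - 1 - int t)"
    using j by (intro exI[of _ "nat (N - 1 - j)"]) simp
  define t where "t = (LEAST t. \<alpha> (N - 1 - int t) \<noteq> \<beta> (N - 1 - int t))"
  have t: "\<alpha> (N - 1 - int t) \<noteq> \<beta> (N - 1 - int t)" unfolding t_def using ex by (rule LeastI_ex)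
  have below: "\<alpha> (N - 1 - int s) = \<beta> (N - 1 - int s)" if "s < t" for s
    using not_less_Least[of s "\<lambda>t. \<alpha> (N - 1 - int t) \<noteq> \<beta> (N - 1 - int t)"] that unfolding t_def by blast
  have "\<alpha> (j + (N - int t)) = \<beta> (j + (N - int t))" if "0 \<le> j" for j
  proof (cases "N \<le> j + (N - int t)")
    case False
    then have "j + (N - int t) = N - 1 - int (nat (int t - 1 - j))" "nat (int t - 1 - j) < t"
      using that by auto
    then show ?thesis using below by presburger
  qed (rule agree)
  moreover have "shiftk (N - int t) \<alpha> (- 1) \<noteq> shiftk (N - int t) \<beta> (- 1)"
    using t by (simp add: shiftk_def algebra_simps)
  ultimately show ?thesis by (auto simp: shiftk_def)
qed

lemma shiftk_first_disagreement:
  fixes \<alpha> \<beta> :: "int \<Rightarrow> nat"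
  assumes ne: "\<alpha> \<noteq> \<beta>" and agree: "\<And>j. j \<le> - N \<Longrightarrow> \<alpha> j = \<beta> j"
  shows "\<exists>k. shiftk k \<alpha> 0 \<noteq> shiftk k \<beta> 0 \<and> (\<forall>j<0. shiftk k \<alpha> j = shiftk k \<beta> j)"
proof -
  obtain j where j: "\<alpha> j \<noteq> \<beta> j" using ne by auto
  then have "- N < j" using agree[of j] by (metis not_le)
  then have ex: "\<exists>t::nat. \<alpha> (1 - N + int t) \<noteq> \<beta> (1 - N + int t)"
    using j by (intro exI[of _ "nat (j - 1 + N)"]) simp
  define t where "t = (LEAST t. \<alpha> (1 - N + int t) \<noteq> \<beta> (1 - N + int t))"
  have t: "\<alpha> (1 - N + int t) \<noteq> \<beta> (1 - N + int t)" unfolding t_def using ex by (rule LeastI_ex)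
  have below: "\<alpha> (1 - N + int s) = \<beta> (1 - N + int s)" if "s < t" for s
    using not_less_Least[of s "\<lambda>t. \<alpha> (1 - N + int t) \<noteq> \<beta> (1 - N + int t)"] that unfolding t_def by blast
  have "\<alpha> (j + (1 - N + int t)) = \<beta> (j + (1 - N + int t))" if "j < 0" for j
  proof (cases "j + (1 - N + int t) \<le> - N")
    case False
    then have "j + (1 - N + int t) = 1 - N + int (nat (int t + j))" "nat (int t + j) < t"
      using that by auto
    then show ?thesis using below by presburger
  qed (rule agree)
  then show ?thesis using t by (intro exI[of _ "1 - N + int t"]) (simp add: shiftk_def)
qed

lemma pos_asymp_sym: "pos_asymp \<alpha> \<beta> \<Longrightarrow> pos_asymp \<beta> \<alpha>"
  unfolding pos_asymp_def by metis

lemma neg_asymp_sym: "neg_asymp \<alpha> \<beta> \<Longrightarrow> neg_asymp \<beta> \<alpha>"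
  unfolding neg_asymp_def by metis

lemma monoseq_one_sided_limit:
  fixes y :: "nat \<Rightarrow> real"
  assumes mono: "monoseq y" and x: "y \<longlonglongrightarrow> x"
  shows "eventually (\<lambda>k. x \<le> y k) sequentially \<or> (\<forall>k. y k < x)"
proof (cases "incseq y")
  case True
  have "eventually (\<lambda>k. x \<le> y k) sequentially" if "x \<le> y k0" for k0
    using True that unfolding eventually_sequentially incseq_def by (blast intro: order.trans)
  then show ?thesis by (meson not_le)
next
  case False
  then have "decseq y" using mono monoseq_iff by blast
  then show ?thesis using decseq_ge[OF _ x] by (simp add: always_eventually)
qed

section \<open>The interval exchange and its dual\<close>

locale iet =
  fixes n :: nat and a :: "nat \<Rightarrow> real" and \<tau> :: "nat \<Rightarrow> nat"
  assumes n2: "n \<ge> 2" and apos: "\<forall>i\<in>{1..n}. a i > 0" and asum: "(\<Sum>i=1..n. a i) = 1"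
    and perm: "\<tau> permutes {1..n}" and irr: "irreducible_perm n \<tau>" and kea: "keane n a \<tau>"
begin

abbreviation b where "b \<equiv> iet_b a"
abbreviation bt where "bt \<equiv> iet_btau a \<tau>"
abbreviation T where "T \<equiv> iet_T n a \<tau>"
abbreviation Td where "Td \<equiv> iet_Td n a \<tau>"
abbreviation D where "D \<equiv> iet_D n a"
abbreviation Dtau where "Dtau \<equiv> iet_Dtau n a \<tau>"
abbreviation R where "R \<equiv> iet_R n a \<tau>"
abbreviation X where "X \<equiv> iet_X n a \<tau>"
abbreviation I where "I \<equiv> itin n a \<tau>"
abbreviation I_d where "I_d \<equiv> itin_d n a \<tau>"

text \<open>\<open>cell x\<close> is the index \<open>i\<close> with \<open>x \<in> J\<^sub>i\<close>, on which \<open>T\<close> translates by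
  \<open>transl i\<close>; \<open>cell_tau y\<close> is the index \<open>m\<close> with \<open>b\<^sup>\<tau>\<^sub>m\<^sub>-\<^sub>1 \<le> y < b\<^sup>\<tau>\<^sub>m\<close>, so that
  \<open>pre_cell y = \<tau>\<^sup>-\<^sup>1 (cell_tau y)\<close> is the cell of \<open>T\<^sup>-\<^sup>1 y\<close>. The suffix \<open>_d\<close> marks the
  versions for the dual transformation with left-open intervals.\<close>

definition transl :: "nat \<Rightarrow> real" where "transl i = bt (\<tau> i - 1) - b (i - 1)"
definition cell :: "real \<Rightarrow> nat" where "cell x = (THE i. i \<in> {1..n} \<and> x \<in> iet_J a i)"
definition cell_d :: "real \<Rightarrow> nat" where "cell_d x = (THE i. i \<in> {1..n} \<and> x \<in> iet_Jd a i)"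
definition cell_tau :: "real \<Rightarrow> nat" where "cell_tau y = (THE m. m \<in> {1..n} \<and> bt (m - 1) \<le> y \<and> y < bt m)"
definition cell_tau_d :: "real \<Rightarrow> nat" where "cell_tau_d y = (THE m. m \<in> {1..n} \<and> bt (m - 1) < y \<and> y \<le> bt m)"
definition pre_cell :: "real \<Rightarrow> nat" where "pre_cell y = inv \<tau> (cell_tau y)"
definition pre_cell_d :: "real \<Rightarrow> nat" where "pre_cell_d y = inv \<tau> (cell_tau_d y)"
definition Tinv :: "real \<Rightarrow> real" where "Tinv y = y - transl (pre_cell y)"
definition Tdinv :: "real \<Rightarrow> real" where "Tdinv y = y - transl (pre_cell_d y)"

lemma tau_in: "i \<in> {1..n} \<Longrightarrow> \<tau> i \<in> {1..n}" using permutes_in_image[OF perm] by blast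
lemma inv_tau_in: "i \<in> {1..n} \<Longrightarrow> inv \<tau> i \<in> {1..n}" using permutes_in_image[OF permutes_inv[OF perm]] by blast
lemma tau_inv[simp]: "\<tau> (inv \<tau> i) = i" using permutes_inverses[OF perm] by blast
lemma inv_tau[simp]: "inv \<tau> (\<tau> i) = i" using permutes_inverses[OF perm] by blast

lemma b_Suc: "b (Suc i) = b i + a (Suc i)" by (simp add: iet_b_def)
lemma b0[simp]: "b 0 = 0" by (simp add: iet_b_def)
lemma bn: "b n = 1" using asum by (simp add: iet_b_def)
lemma b_less_Suc: "i < n \<Longrightarrow> b i < b (Suc i)" using apos b_Suc by auto
lemma bt_Suc: "bt (Suc i) = bt i + a (inv \<tau> (Suc i))" by (simp add: iet_btau_def)
lemma bt0[simp]: "bt 0 = 0" by (simp add: iet_btau_def)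
lemma btn: "bt n = 1"
proof -
  have "(\<Sum>j=1..n. a j) = sum a (inv \<tau> ` {1..n})" using permutes_image[OF permutes_inv[OF perm]] by simp
  also have "\<dots> = sum (a \<circ> inv \<tau>) {1..n}"
    by (rule sum.reindex) (meson permutes_inj_on permutes_inv[OF perm])
  finally show ?thesis using asum by (simp add: iet_btau_def)
qed
lemma bt_less_Suc: "i < n \<Longrightarrow> bt i < bt (Suc i)" using apos bt_Suc inv_tau_in[of "Suc i"] by auto

lemma b_less: "i < j \<Longrightarrow> j \<le> n \<Longrightarrow> b i < b j" using incr_less[of n b, OF b_less_Suc] by blast
lemma b_le: "i \<le> j \<Longrightarrow> j \<le> n \<Longrightarrow> b i \<le> b j" using incr_le[of n b, OF b_less_Suc] by blast
lemma bt_less: "i < j \<Longrightarrow> j \<le> n \<Longrightarrow> bt i < bt j" using incr_less[of n bt, OF bt_less_Suc] by blast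
lemma bt_le: "i \<le> j \<Longrightarrow> j \<le> n \<Longrightarrow> bt i \<le> bt j" using incr_le[of n bt, OF bt_less_Suc] by blast
lemma b_inj: "i \<le> n \<Longrightarrow> j \<le> n \<Longrightarrow> b i = b j \<Longrightarrow> i = j"
  using b_less[of i j] b_less[of j i] by (cases i j rule: linorder_cases) auto
lemma bt_inj: "i \<le> n \<Longrightarrow> j \<le> n \<Longrightarrow> bt i = bt j \<Longrightarrow> i = j"
  using bt_less[of i j] bt_less[of j i] by (cases i j rule: linorder_cases) auto
lemma b_nonneg: "i \<le> n \<Longrightarrow> 0 \<le> b i" using b_le[of 0 i] by simp
lemma b_le1: "i \<le> n \<Longrightarrow> b i \<le> 1" using b_le[of i n] bn by simp
lemma bt_nonneg: "i \<le> n \<Longrightarrow> 0 \<le> bt i" using bt_le[of 0 i] by simp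
lemma bt_le1: "i \<le> n \<Longrightarrow> bt i \<le> 1" using bt_le[of i n] btn by simp

lemma b_diff: "i \<in> {1..n} \<Longrightarrow> b i - b (i - 1) = a i" using b_Suc[of "i-1"] by (cases i) auto
lemma bt_diff: "i \<in> {1..n} \<Longrightarrow> bt (\<tau> i) - bt (\<tau> i - 1) = a i"
proof -
  assume i: "i \<in> {1..n}"
  have "Suc (\<tau> i - 1) = \<tau> i" using tau_in[OF i] by auto
  then have "bt (\<tau> i) = bt (\<tau> i - 1) + a (inv \<tau> (\<tau> i))" by (metis bt_Suc)
  then show ?thesis by simp
qed

lemma cell_eqI: "i \<in> {1..n} \<Longrightarrow> b (i - 1) \<le> x \<Longrightarrow> x < b i \<Longrightarrow> cell x = i"
  unfolding cell_def iet_J_def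
  by (rule the_equality) (auto intro: incr_cell_unique[of n b, OF b_less_Suc])
lemma cell_in: "0 \<le> x \<Longrightarrow> x < 1 \<Longrightarrow> cell x \<in> {1..n} \<and> b (cell x - 1) \<le> x \<and> x < b (cell x)"
  using incr_cell_ex[of n b x, OF b_less_Suc b0 bn] cell_eqI by metis
lemma cell_d_eqI: "i \<in> {1..n} \<Longrightarrow> b (i - 1) < x \<Longrightarrow> x \<le> b i \<Longrightarrow> cell_d x = i"
  unfolding cell_d_def iet_Jd_def
  by (rule the_equality) (auto intro: incr_cell_d_unique[of n b, OF b_less_Suc])
lemma cell_d_in: "0 < x \<Longrightarrow> x \<le> 1 \<Longrightarrow> cell_d x \<in> {1..n} \<and> b (cell_d x - 1) < x \<and> x \<le> b (cell_d x)"
  using incr_cell_d_ex[of n b x, OF b_less_Suc b0 bn] cell_d_eqI by metis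
lemma cell_tau_eqI: "i \<in> {1..n} \<Longrightarrow> bt (i - 1) \<le> x \<Longrightarrow> x < bt i \<Longrightarrow> cell_tau x = i"
  unfolding cell_tau_def
  by (rule the_equality) (auto intro: incr_cell_unique[of n bt, OF bt_less_Suc])
lemma cell_tau_in: "0 \<le> x \<Longrightarrow> x < 1 \<Longrightarrow> cell_tau x \<in> {1..n} \<and> bt (cell_tau x - 1) \<le> x \<and> x < bt (cell_tau x)"
  using incr_cell_ex[of n bt x, OF bt_less_Suc bt0 btn] cell_tau_eqI by metis
lemma cell_tau_d_eqI: "i \<in> {1..n} \<Longrightarrow> bt (i - 1) < x \<Longrightarrow> x \<le> bt i \<Longrightarrow> cell_tau_d x = i"
  unfolding cell_tau_d_def
  by (rule the_equality) (auto intro: incr_cell_d_unique[of n bt, OF bt_less_Suc])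
lemma cell_tau_d_in: "0 < x \<Longrightarrow> x \<le> 1 \<Longrightarrow> cell_tau_d x \<in> {1..n} \<and> bt (cell_tau_d x - 1) < x \<and> x \<le> bt (cell_tau_d x)"
  using incr_cell_d_ex[of n bt x, OF bt_less_Suc bt0 btn] cell_tau_d_eqI by metis

lemma T_eq_transl: "T x = x + transl (cell x)"
  by (simp add: iet_T_def cell_def transl_def Let_def)
lemma Td_eq_transl: "Td x = x + transl (cell_d x)"
  by (simp add: iet_Td_def cell_d_def transl_def Let_def)

lemma T_on_cell:
  assumes x: "0 \<le> x" "x < 1"
  shows "bt (\<tau> (cell x) - 1) \<le> T x \<and> T x < bt (\<tau> (cell x)) \<and> cell_tau (T x) = \<tau> (cell x)
    \<and> pre_cell (T x) = cell x \<and> 0 \<le> T x \<and> T x < 1"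
proof -
  define i where "i = cell x"
  have i: "i \<in> {1..n}" "b (i - 1) \<le> x" "x < b i" using cell_in[OF x] by (auto simp: i_def)
  have Tx: "T x = x - b (i - 1) + bt (\<tau> i - 1)" by (simp add: T_eq_transl transl_def i_def)
  have l: "b i - b (i - 1) = a i" "bt (\<tau> i) - bt (\<tau> i - 1) = a i"
    using b_diff[OF i(1)] bt_diff[OF i(1)] by auto
  have t: "\<tau> i \<in> {1..n}" using tau_in[OF i(1)] .
  have A: "bt (\<tau> i - 1) \<le> T x" "T x < bt (\<tau> i)" using Tx i l by auto
  have B: "cell_tau (T x) = \<tau> i" using cell_tau_eqI[OF t A] .
  have C: "0 \<le> T x" "T x < 1"
    using A bt_nonneg[of "\<tau> i - 1", OF le_trans[OF diff_le_self]] bt_le1[of "\<tau> i"] t by (auto simp del: One_nat_def)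
  show ?thesis using A B C by (simp add: pre_cell_def i_def)
qed

lemma Td_on_cell:
  assumes x: "0 < x" "x \<le> 1"
  shows "bt (\<tau> (cell_d x) - 1) < Td x \<and> Td x \<le> bt (\<tau> (cell_d x))
    \<and> cell_tau_d (Td x) = \<tau> (cell_d x) \<and> pre_cell_d (Td x) = cell_d x \<and> 0 < Td x \<and> Td x \<le> 1"
proof -
  define i where "i = cell_d x"
  have i: "i \<in> {1..n}" "b (i - 1) < x" "x \<le> b i" using cell_d_in[OF x] by (auto simp: i_def)
  have Tx: "Td x = x - b (i - 1) + bt (\<tau> i - 1)" by (simp add: Td_eq_transl transl_def i_def)
  have l: "b i - b (i - 1) = a i" "bt (\<tau> i) - bt (\<tau> i - 1) = a i"
    using b_diff[OF i(1)] bt_diff[OF i(1)] by auto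
  have t: "\<tau> i \<in> {1..n}" using tau_in[OF i(1)] .
  have A: "bt (\<tau> i - 1) < Td x" "Td x \<le> bt (\<tau> i)" using Tx i l by auto
  have B: "cell_tau_d (Td x) = \<tau> i" using cell_tau_d_eqI[OF t A] .
  have C: "0 < Td x" "Td x \<le> 1"
    using A bt_nonneg[of "\<tau> i - 1", OF le_trans[OF diff_le_self]] bt_le1[of "\<tau> i"] t by (auto simp del: One_nat_def)
  show ?thesis using A B C by (simp add: pre_cell_d_def i_def)
qed

lemma Tinv_on_cell:
  assumes y: "0 \<le> y" "y < 1"
  shows "pre_cell y \<in> {1..n} \<and> bt (\<tau> (pre_cell y) - 1) \<le> y \<and> y < bt (\<tau> (pre_cell y))
    \<and> b (pre_cell y - 1) \<le> Tinv y \<and> Tinv y < b (pre_cell y) \<and> cell (Tinv y) = pre_cell y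
    \<and> 0 \<le> Tinv y \<and> Tinv y < 1 \<and> T (Tinv y) = y"
proof -
  define m where "m = cell_tau y"
  define i where "i = inv \<tau> m"
  have m: "m \<in> {1..n}" "bt (m - 1) \<le> y" "y < bt m" using cell_tau_in[OF y] by (auto simp: m_def)
  have i: "i \<in> {1..n}" "\<tau> i = m" using inv_tau_in[OF m(1)] by (auto simp: i_def)
  have Ty: "Tinv y = y - bt (m - 1) + b (i - 1)"
    by (simp add: Tinv_def pre_cell_def transl_def i_def m_def)
  have l: "b i - b (i - 1) = a i" "bt m - bt (m - 1) = a i"
    using b_diff[OF i(1)] bt_diff[OF i(1)] i by auto
  have A: "b (i - 1) \<le> Tinv y" "Tinv y < b i" using Ty m l by auto
  have B: "cell (Tinv y) = i" using cell_eqI[OF i(1) A] .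
  have C: "0 \<le> Tinv y" "Tinv y < 1"
    using A b_nonneg[of "i - 1", OF le_trans[OF diff_le_self]] b_le1[of i] i by (auto simp del: One_nat_def)
  have E: "T (Tinv y) = y" using B by (simp add: T_eq_transl Ty transl_def i)
  show ?thesis using A B C E m i by (simp add: pre_cell_def i_def m_def)
qed

lemma Tdinv_on_cell:
  assumes y: "0 < y" "y \<le> 1"
  shows "pre_cell_d y \<in> {1..n} \<and> bt (\<tau> (pre_cell_d y) - 1) < y \<and> y \<le> bt (\<tau> (pre_cell_d y))
    \<and> b (pre_cell_d y - 1) < Tdinv y \<and> Tdinv y \<le> b (pre_cell_d y)
    \<and> cell_d (Tdinv y) = pre_cell_d y \<and> 0 < Tdinv y \<and> Tdinv y \<le> 1 \<and> Td (Tdinv y) = y"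
proof -
  define m where "m = cell_tau_d y"
  define i where "i = inv \<tau> m"
  have m: "m \<in> {1..n}" "bt (m - 1) < y" "y \<le> bt m" using cell_tau_d_in[OF y] by (auto simp: m_def)
  have i: "i \<in> {1..n}" "\<tau> i = m" using inv_tau_in[OF m(1)] by (auto simp: i_def)
  have Ty: "Tdinv y = y - bt (m - 1) + b (i - 1)"
    by (simp add: Tdinv_def pre_cell_d_def transl_def i_def m_def)
  have l: "b i - b (i - 1) = a i" "bt m - bt (m - 1) = a i"
    using b_diff[OF i(1)] bt_diff[OF i(1)] i by auto
  have A: "b (i - 1) < Tdinv y" "Tdinv y \<le> b i" using Ty m l by auto
  have B: "cell_d (Tdinv y) = i" using cell_d_eqI[OF i(1) A] .
  have C: "0 < Tdinv y" "Tdinv y \<le> 1"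
    using A b_nonneg[of "i - 1", OF le_trans[OF diff_le_self]] b_le1[of i] i by (auto simp del: One_nat_def)
  have E: "Td (Tdinv y) = y" using B by (simp add: Td_eq_transl Ty transl_def i)
  show ?thesis using A B C E m i by (simp add: pre_cell_d_def i_def m_def)
qed

lemma T_cell_fill:
  assumes "i \<in> cell ` {0..<1}" and z: "b (i - 1) \<le> z" "z < b i"
  shows "z \<in> {0..<1} \<and> cell z = i"
proof -
  have i: "i \<in> {1..n}" using assms(1) cell_in by auto
  then have "0 \<le> b (i - 1)" "b i \<le> 1" using b_nonneg[of "i - 1"] b_le1[of i] by auto
  then show ?thesis using cell_eqI[OF i z] z by auto
qed

lemma Tinv_cell_fill:
  assumes "i \<in> pre_cell ` {0..<1}" and z: "bt (\<tau> i - 1) \<le> z" "z < bt (\<tau> i)"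
  shows "z \<in> {0..<1} \<and> pre_cell z = i"
proof -
  have i: "i \<in> {1..n}" using assms(1) Tinv_on_cell by auto
  have t: "\<tau> i \<in> {1..n}" using tau_in[OF i] .
  have "0 \<le> bt (\<tau> i - 1)" "bt (\<tau> i) \<le> 1" using bt_nonneg[of "\<tau> i - 1"] bt_le1[of "\<tau> i"] t by auto
  then show ?thesis using cell_tau_eqI[OF t z] z by (auto simp: pre_cell_def)
qed

sublocale T: interval_translation "{0..<1}" T cell transl "\<lambda>i. b (i - 1)" b
proof unfold_locales
  show "T z \<in> {0..<1}" if "z \<in> {0..<1}" for z using T_on_cell[of z] that by auto
  show "T z = z + transl (cell z)" for z by (rule T_eq_transl)
  show "b (cell z - 1) \<le> z \<and> z < b (cell z)" if "z \<in> {0..<1}" for z using cell_in[of z] that by auto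
qed (rule T_cell_fill)

sublocale Td: pw_translation "{0<..1}" Td cell_d transl
proof unfold_locales
  show "Td z \<in> {0<..1}" if "z \<in> {0<..1}" for z using Td_on_cell[of z] that by auto
qed (rule Td_eq_transl)

sublocale Tinv: interval_translation "{0..<1}" Tinv pre_cell "\<lambda>i. - transl i" "\<lambda>i. bt (\<tau> i - 1)" "\<lambda>i. bt (\<tau> i)"
proof unfold_locales
  show "Tinv z \<in> {0..<1}" if "z \<in> {0..<1}" for z using Tinv_on_cell[of z] that by auto
  show "Tinv z = z + - transl (pre_cell z)" for z by (simp add: Tinv_def)
  show "bt (\<tau> (pre_cell z) - 1) \<le> z \<and> z < bt (\<tau> (pre_cell z))" if "z \<in> {0..<1}" for z
    using Tinv_on_cell[of z] that by auto
qed (rule Tinv_cell_fill)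

sublocale Tdinv: pw_translation "{0<..1}" Tdinv pre_cell_d "\<lambda>i. - transl i"
proof unfold_locales
  show "Tdinv z \<in> {0<..1}" if "z \<in> {0<..1}" for z using Tdinv_on_cell[of z] that by auto
  show "Tdinv z = z + - transl (pre_cell_d z)" for z by (simp add: Tdinv_def)
qed

lemma Tinv_T: "0 \<le> x \<Longrightarrow> x < 1 \<Longrightarrow> Tinv (T x) = x"
  using T_on_cell[of x] by (simp add: Tinv_def T_eq_transl)
lemma Tdinv_Td: "0 < x \<Longrightarrow> x \<le> 1 \<Longrightarrow> Tdinv (Td x) = x"
  using Td_on_cell[of x] by (simp add: Tdinv_def Td_eq_transl)

lemma T_bij: "bij_betw T {0..<1} {0..<1}"
  by (rule bij_betw_byWitness[where f'=Tinv]) (auto simp: Tinv_T Tinv_on_cell T_on_cell)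
lemma Td_bij: "bij_betw Td {0<..1} {0<..1}"
  by (rule bij_betw_byWitness[where f'=Tdinv]) (auto simp: Tdinv_Td Tdinv_on_cell Td_on_cell)

lemma inv_into_T: "y \<in> {0..<1} \<Longrightarrow> inv_into {0..<1} T y = Tinv y"
  using Tinv_on_cell[of y] T_bij by (intro inv_into_f_eq) (auto simp: bij_betw_def)
lemma inv_into_Td: "y \<in> {0<..1} \<Longrightarrow> inv_into {0<..1} Td y = Tdinv y"
  using Tdinv_on_cell[of y] Td_bij by (intro inv_into_f_eq) (auto simp: bij_betw_def)

lemma iet_Tpow_eq: "iet_Tpow n a \<tau> = int_iter T {0..<1}"
  by (intro ext) (simp add: iet_Tpow_def int_iter_def)
lemma iet_Tdpow_eq: "iet_Tdpow n a \<tau> = int_iter Td {0<..1}"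
  by (intro ext) (simp add: iet_Tdpow_def int_iter_def)

lemma I_eq: "I x k = cell (int_iter T {0..<1} k x)"
  by (simp add: itin_def cell_def iet_Tpow_eq)
lemma I_d_eq: "I_d x k = cell_d (int_iter Td {0<..1} k x)"
  by (simp add: itin_d_def cell_d_def iet_Tdpow_eq)

lemma funpow_inv_into_T: "x \<in> {0..<1} \<Longrightarrow> (inv_into {0..<1} T ^^ m) x = (Tinv ^^ m) x"
  using funpow_cong_on[of "{0..<1}" "inv_into {0..<1} T" Tinv x m] inv_into_T Tinv.maps_into by metis
lemma funpow_inv_into_Td: "x \<in> {0<..1} \<Longrightarrow> (inv_into {0<..1} Td ^^ m) x = (Tdinv ^^ m) x"
  using funpow_cong_on[of "{0<..1}" "inv_into {0<..1} Td" Tdinv x m] inv_into_Td Tdinv.maps_into by metis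

lemma I_nat: "x \<in> {0..<1} \<Longrightarrow> I x (int j) = cell ((T ^^ j) x)"
  by (simp add: I_eq int_iter_of_nat)
lemma I_d_nat: "x \<in> {0<..1} \<Longrightarrow> I_d x (int j) = cell_d ((Td ^^ j) x)"
  by (simp add: I_d_eq int_iter_of_nat)
lemma I_neg: "x \<in> {0..<1} \<Longrightarrow> I x (- int (Suc m)) = pre_cell ((Tinv ^^ m) x)"
proof -
  assume x: "x \<in> {0..<1}"
  have "I x (- int (Suc m)) = cell ((Tinv ^^ Suc m) x)"
    using funpow_inv_into_T[OF x, of "Suc m"] by (simp only: I_eq int_iter_neg)
  also have "\<dots> = pre_cell ((Tinv ^^ m) x)"
    using Tinv_on_cell funpow_closed[of "{0..<1}" Tinv, OF Tinv.maps_into x, of m] by auto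
  finally show ?thesis .
qed
lemma I_d_neg: "x \<in> {0<..1} \<Longrightarrow> I_d x (- int (Suc m)) = pre_cell_d ((Tdinv ^^ m) x)"
proof -
  assume x: "x \<in> {0<..1}"
  have "I_d x (- int (Suc m)) = cell_d ((Tdinv ^^ Suc m) x)"
    using funpow_inv_into_Td[OF x, of "Suc m"] by (simp only: I_d_eq int_iter_neg)
  also have "\<dots> = pre_cell_d ((Tdinv ^^ m) x)"
    using Tdinv_on_cell funpow_closed[of "{0<..1}" Tdinv, OF Tdinv.maps_into x, of m] by auto
  finally show ?thesis .
qed

lemma shiftk_I: "x \<in> {0..<1} \<Longrightarrow> shiftk k (I x) = I (int_iter T {0..<1} k x) \<and> int_iter T {0..<1} k x \<in> {0..<1}"
  using int_iter_add[OF T_bij] int_iter_in[OF T_bij] by (auto simp: shiftk_def I_eq fun_eq_iff)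
lemma shiftk_I_d: "x \<in> {0<..1} \<Longrightarrow> shiftk k (I_d x) = I_d (int_iter Td {0<..1} k x) \<and> int_iter Td {0<..1} k x \<in> {0<..1}"
  using int_iter_add[OF Td_bij] int_iter_in[OF Td_bij] by (auto simp: shiftk_def I_d_eq fun_eq_iff)

lemma D_eq: "D = b ` {1..n - 1}" by (simp add: iet_D_def)
lemma D_orbit_avoids_D: "d \<in> D \<Longrightarrow> 1 \<le> k \<Longrightarrow> (T ^^ k) d \<in> D \<Longrightarrow> False"
  using kea unfolding keane_def by blast
lemma D_in_open: "d \<in> D \<Longrightarrow> 0 < d \<and> d < 1"
proof -
  assume "d \<in> D"
  then obtain m where m: "m \<in> {1..n - 1}" "d = b m" by (auto simp: D_eq)
  then show ?thesis using b_less[of 0 m] b_less[of m n] bn n2 by auto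
qed

lemma tau_1_ne_1: "\<tau> 1 \<noteq> 1"
proof
  assume "\<tau> 1 = 1"
  then have "\<tau> ` {1..1} = {1..1}" by simp
  moreover have "(1::nat) \<in> {1..n - 1}" using n2 by simp
  ultimately show False using irr unfolding irreducible_perm_def by blast
qed

lemma T_eq_0_imp_in_D: assumes x: "0 \<le> x" "x < 1" and T0: "T x = 0" shows "x \<in> D"
proof -
  define i where "i = cell x"
  have i: "i \<in> {1..n}" "b (i - 1) \<le> x" "x < b i" using cell_in[OF x] by (auto simp: i_def)
  have Tx: "T x = x - b (i - 1) + bt (\<tau> i - 1)" by (simp add: T_eq_transl transl_def i_def)
  have t: "\<tau> i \<in> {1..n}" using tau_in[OF i(1)] .
  have "0 \<le> bt (\<tau> i - 1)" using bt_nonneg[of "\<tau> i - 1"] t by auto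
  then have e: "x = b (i - 1)" "bt (\<tau> i - 1) = 0" using Tx T0 i by auto
  then have "\<tau> i - 1 = 0" using bt_inj[of "\<tau> i - 1" 0] t by auto
  then have "\<tau> i = 1" using t by auto
  then have "i \<noteq> 1" using tau_1_ne_1 by auto
  then have "i - 1 \<in> {1..n - 1}" using i by auto
  then show ?thesis using e by (auto simp: D_eq)
qed

subsection \<open>Aperiodicity and injectivity of itineraries\<close>

lemma left_end_not_periodic:
  assumes i: "i \<in> {1..n}" and p: "0 < p"
  shows "(T ^^ p) (b (i - 1)) \<noteq> b (i - 1)"
proof
  assume per: "(T ^^ p) (b (i - 1)) = b (i - 1)"
  show False
  proof (cases "i = 1")
    case False
    then have "i - 1 \<in> {1..n - 1}" using i by auto
    then have "b (i - 1) \<in> D" by (auto simp: D_eq)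
    then show False using D_orbit_avoids_D[of "b (i - 1)" p] per p by simp
  next
    case True
    \<comment> \<open>The orbit of \<open>0\<close> passes through the discontinuity \<open>T\<^sup>-\<^sup>1 0 \<in> D\<close>.\<close>
    define w where "w = (T ^^ (p - 1)) 0"
    have "T w = (T ^^ p) 0" by (subst Suc_pred'[OF p]) (simp add: w_def)
    then have wD: "w \<in> D"
      using per True T_eq_0_imp_in_D T.funpow_in[of 0 "p - 1"] by (simp add: w_def)
    have "(T ^^ p) w = (T ^^ (p - 1)) ((T ^^ p) 0)"
      by (simp add: w_def flip: funpow_add[unfolded comp_def, THEN fun_cong] add.commute)
    then have "(T ^^ p) w = w" using per True by (simp add: w_def)
    then show False using D_orbit_avoids_D[OF wD, of p] wD p by simp
  qed
qed

lemma T_aperiodic: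
  assumes x: "x \<in> {0..<1}" and p: "0 < p"
  shows "(T ^^ p) x \<noteq> x"
proof
  assume "(T ^^ p) x = x"
  then obtain u j where u: "u \<in> {0..<1}" "(T ^^ p) u = u" "j < p" "(T ^^ j) u = b (cell ((T ^^ j) u) - 1)"
    using T.periodic_orbit_hits_left_end[OF x p] by blast
  define v where "v = (T ^^ j) u"
  have "(T ^^ p) v = (T ^^ (p + j)) u" by (simp add: v_def funpow_add)
  also have "\<dots> = v" using u(2) by (simp only: v_def add.commute[of p j] funpow_add o_apply)
  finally show False
    using left_end_not_periodic[of "cell v" p] cell_in[of v] T.funpow_in[OF u(1), of j] u(4) p
    by (simp add: v_def)
qed

lemma funpow_T_Tinv: "y \<in> {0..<1} \<Longrightarrow> (T ^^ p) ((Tinv ^^ p) y) = y"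
proof (induction p arbitrary: y)
  case (Suc p)
  have "(T ^^ Suc p) ((Tinv ^^ Suc p) y) = (T ^^ p) (T (Tinv ((Tinv ^^ p) y)))"
    by (simp only: funpow_Suc_right[of p T] funpow.simps(2)[of p Tinv] o_apply)
  also have "\<dots> = (T ^^ p) ((Tinv ^^ p) y)"
    using Tinv_on_cell Tinv.funpow_in[OF Suc.prems, of p] by auto
  finally show ?case using Suc by simp
qed simp

lemma funpow_Td_Tdinv: "y \<in> {0<..1} \<Longrightarrow> (Td ^^ p) ((Tdinv ^^ p) y) = y"
proof (induction p arbitrary: y)
  case (Suc p)
  have "(Td ^^ Suc p) ((Tdinv ^^ Suc p) y) = (Td ^^ p) (Td (Tdinv ((Tdinv ^^ p) y)))"
    by (simp only: funpow_Suc_right[of p Td] funpow.simps(2)[of p Tdinv] o_apply)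
  also have "\<dots> = (Td ^^ p) ((Tdinv ^^ p) y)"
    using Tdinv_on_cell Tdinv.funpow_in[OF Suc.prems, of p] by auto
  finally show ?case using Suc by simp
qed simp

lemma Tinv_aperiodic: "x \<in> {0..<1} \<Longrightarrow> 0 < p \<Longrightarrow> (Tinv ^^ p) x \<noteq> x"
  using funpow_T_Tinv[of x p] T_aperiodic[of x p] by auto

lemma Td_cells: "z \<in> {0<..1} \<Longrightarrow> b (cell_d z - 1) < z \<and> z \<le> b (cell_d z)"
  using cell_d_in by auto

lemma Td_cell_idx: "z \<in> {0<..1} \<Longrightarrow> cell_d z \<in> cell ` {0..<1}"
  using cell_d_in[of z] cell_eqI[of "cell_d z" "b (cell_d z - 1)"] b_less[of "cell_d z - 1" "cell_d z"]
    b_nonneg[of "cell_d z - 1"] b_le1[of "cell_d z"]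
  by (intro image_eqI[of _ _ "b (cell_d z - 1)"]) auto

lemma Tdinv_cells: "z \<in> {0<..1} \<Longrightarrow> bt (\<tau> (pre_cell_d z) - 1) < z \<and> z \<le> bt (\<tau> (pre_cell_d z))"
  using Tdinv_on_cell by auto

lemma Tdinv_cell_idx: "z \<in> {0<..1} \<Longrightarrow> pre_cell_d z \<in> pre_cell ` {0..<1}"
  using Tinv_on_cell[of "T (b (pre_cell_d z - 1))"] T_on_cell[of "b (pre_cell_d z - 1)"] Tdinv_on_cell[of z]
    b_nonneg[of "pre_cell_d z - 1"] b_less[of "pre_cell_d z - 1" n] bn
    cell_eqI[of "pre_cell_d z" "b (pre_cell_d z - 1)"] b_less[of "pre_cell_d z - 1" "pre_cell_d z"]
  by (intro image_eqI[of _ _ "T (b (pre_cell_d z - 1))"]) auto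

lemma T_follows_Td:
  "v \<in> {0<..1} \<Longrightarrow> \<exists>\<delta>>0. \<forall>e\<in>{-\<delta><..<0}. \<forall>j\<le>p. (T ^^ j) (v + e) = (Td ^^ j) v + e
    \<and> (T ^^ j) (v + e) \<in> {0..<1} \<and> cell ((T ^^ j) (v + e)) = cell_d ((Td ^^ j) v)"
  by (rule T.orbit_left_follows_dual[OF Td.pw_translation_axioms Td_cells Td_cell_idx])

lemma Tinv_follows_Tdinv:
  "v \<in> {0<..1} \<Longrightarrow> \<exists>\<delta>>0. \<forall>e\<in>{-\<delta><..<0}. \<forall>j\<le>p. (Tinv ^^ j) (v + e) = (Tdinv ^^ j) v + e
    \<and> (Tinv ^^ j) (v + e) \<in> {0..<1} \<and> pre_cell ((Tinv ^^ j) (v + e)) = pre_cell_d ((Tdinv ^^ j) v)"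
  by (rule Tinv.orbit_left_follows_dual[OF Tdinv.pw_translation_axioms Tdinv_cells Tdinv_cell_idx])

text \<open>A periodic point of the dual map would, by continuity from the left, give a periodic
  point of \<open>T\<close>.\<close>

lemma Td_aperiodic:
  assumes v: "v \<in> {0<..1}" and p: "0 < p"
  shows "(Td ^^ p) v \<noteq> v"
proof
  assume per: "(Td ^^ p) v = v"
  obtain \<delta> where \<delta>: "\<delta> > 0" "\<forall>e\<in>{-\<delta><..<0}. \<forall>j\<le>p. (T ^^ j) (v + e) = (Td ^^ j) v + e
      \<and> (T ^^ j) (v + e) \<in> {0..<1} \<and> cell ((T ^^ j) (v + e)) = cell_d ((Td ^^ j) v)"
    using T_follows_Td[OF v, of p] by blast
  then have "(T ^^ p) (v - \<delta> / 2) = v - \<delta> / 2" "v - \<delta> / 2 \<in> {0..<1}"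
    using per bspec[OF \<delta>(2), of "- \<delta> / 2"] by fastforce+
  then show False using T_aperiodic p by blast
qed

lemma Tdinv_aperiodic: "x \<in> {0<..1} \<Longrightarrow> 0 < p \<Longrightarrow> (Tdinv ^^ p) x \<noteq> x"
  using funpow_Td_Tdinv[of x p] Td_aperiodic[of x p] by auto

sublocale T: unit_pw_translation "{0..<1}" T cell transl
proof unfold_locales
  show "v \<in> {0..<1} \<and> cell v = cell w"
    if "u \<in> {0..<1}" "w \<in> {0..<1}" "u \<le> v" "v \<le> w" "cell u = cell w" for u v w
    using T.left_closed_cells_convex[OF that] .
qed auto

sublocale Tinv: unit_pw_translation "{0..<1}" Tinv pre_cell "\<lambda>i. - transl i"
proof unfold_locales
  show "v \<in> {0..<1} \<and> pre_cell v = pre_cell w"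
    if "u \<in> {0..<1}" "w \<in> {0..<1}" "u \<le> v" "v \<le> w" "pre_cell u = pre_cell w" for u v w
    using Tinv.left_closed_cells_convex[OF that] .
qed auto

sublocale Td: unit_pw_translation "{0<..1}" Td cell_d transl
proof unfold_locales
  fix u v w assume "u \<in> {0<..1}" "w \<in> {0<..1}" "u \<le> v" "v \<le> w" "cell_d u = cell_d w"
  then show "v \<in> {0<..1} \<and> cell_d v = cell_d w"
    using Td_cells[of u] Td_cells[of w] cell_d_eqI[of "cell_d w" v] cell_d_in[of w] by auto
qed auto

sublocale Tdinv: unit_pw_translation "{0<..1}" Tdinv pre_cell_d "\<lambda>i. - transl i"
proof unfold_locales
  fix u v w assume u: "u \<in> {0<..1}" and w: "w \<in> {0<..1}" and uvw: "u \<le> v" "v \<le> w"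
    and eq: "pre_cell_d u = pre_cell_d w"
  define i where "i = pre_cell_d w"
  have i: "i \<in> {1..n}" "bt (\<tau> i - 1) < v" "v \<le> bt (\<tau> i)"
    using Tdinv_cells[OF u] Tdinv_cells[OF w] Tdinv_on_cell[of w] w eq uvw by (auto simp: i_def)
  have "0 \<le> bt (\<tau> i - 1)" "bt (\<tau> i) \<le> 1"
    using bt_nonneg[of "\<tau> i - 1"] bt_le1[of "\<tau> i"] tau_in[OF i(1)] by auto
  moreover have "pre_cell_d v = i"
    using cell_tau_d_eqI[OF tau_in[OF i(1)] i(2,3)] by (simp add: pre_cell_d_def)
  ultimately show "v \<in> {0<..1} \<and> pre_cell_d v = pre_cell_d w" using i by (auto simp: i_def)
qed auto

lemma T_itinerary_inj:
  "x \<in> {0..<1} \<Longrightarrow> y \<in> {0..<1} \<Longrightarrow> (\<And>j. cell ((T ^^ j) x) = cell ((T ^^ j) y)) \<Longrightarrow> x = y"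
  using T.itinerary_inj[of x y] T_aperiodic by blast

lemma Td_itinerary_inj:
  "x \<in> {0<..1} \<Longrightarrow> y \<in> {0<..1} \<Longrightarrow> (\<And>j. cell_d ((Td ^^ j) x) = cell_d ((Td ^^ j) y)) \<Longrightarrow> x = y"
  using Td.itinerary_inj[of x y] Td_aperiodic by blast

lemma Tinv_itinerary_inj:
  "x \<in> {0..<1} \<Longrightarrow> y \<in> {0..<1} \<Longrightarrow> (\<And>j. pre_cell ((Tinv ^^ j) x) = pre_cell ((Tinv ^^ j) y)) \<Longrightarrow> x = y"
  using Tinv.itinerary_inj[of x y] Tinv_aperiodic by blast

lemma Tdinv_itinerary_inj:
  "x \<in> {0<..1} \<Longrightarrow> y \<in> {0<..1} \<Longrightarrow> (\<And>j. pre_cell_d ((Tdinv ^^ j) x) = pre_cell_d ((Tdinv ^^ j) y)) \<Longrightarrow> x = y"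
  using Tdinv.itinerary_inj[of x y] Tdinv_aperiodic by blast

lemma T_Td_itinerary_eq:
  "x \<in> {0..<1} \<Longrightarrow> y \<in> {0<..1} \<Longrightarrow> (\<And>j. cell ((T ^^ j) x) = cell_d ((Td ^^ j) y)) \<Longrightarrow> x = y"
  by (rule T.eq_if_same_itinerary_as_dual[OF Td.pw_translation_axioms Td_cells T_itinerary_inj])

lemma Tinv_Tdinv_itinerary_eq:
  "x \<in> {0..<1} \<Longrightarrow> y \<in> {0<..1} \<Longrightarrow> (\<And>j. pre_cell ((Tinv ^^ j) x) = pre_cell_d ((Tdinv ^^ j) y)) \<Longrightarrow> x = y"
  by (rule Tinv.eq_if_same_itinerary_as_dual[OF Tdinv.pw_translation_axioms Tdinv_cells Tinv_itinerary_inj])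

subsection \<open>The two itineraries of a point\<close>

lemma Dtau_eq: "Dtau = bt ` {1..n - 1}"
  by (simp add: iet_Dtau_def)

lemma cell_ne_cell_d_iff:
  assumes z: "0 < z" "z < 1"
  shows "cell z \<noteq> cell_d z \<longleftrightarrow> z \<in> D"
proof
  assume ne: "cell z \<noteq> cell_d z"
  define i where "i = cell z"
  define i' where "i' = cell_d z"
  have i: "i \<in> {1..n}" "b (i - 1) \<le> z" "z < b i" using cell_in z by (auto simp: i_def)
  have i': "i' \<in> {1..n}" "b (i' - 1) < z" "z \<le> b i'" using cell_d_in z by (auto simp: i'_def)
  have "\<not> i < i'"
  proof
    assume "i < i'"
    then have "b i \<le> b (i' - 1)" using b_le[of i "i' - 1"] i' by auto
    then show False using i i' by simp
  qed
  then have "i' < i" using ne by (simp add: i_def i'_def)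
  then have "b i' \<le> b (i - 1)" using b_le[of i' "i - 1"] i by auto
  then have "z = b i'" "i' \<in> {1..n - 1}" using \<open>i' < i\<close> i i' by auto
  then show "z \<in> D" by (auto simp: D_eq)
next
  assume "z \<in> D"
  then obtain m where m: "m \<in> {1..n - 1}" "z = b m" by (auto simp: D_eq)
  have "cell z = m + 1" using cell_eqI[of "m + 1" z] b_less[of m "m + 1"] m by auto
  moreover have "cell_d z = m" using cell_d_eqI[of m z] b_less[of "m - 1" m] m by auto
  ultimately show "cell z \<noteq> cell_d z" by simp
qed

lemma pre_cell_ne_pre_cell_d_iff:
  assumes z: "0 < z" "z < 1"
  shows "pre_cell z \<noteq> pre_cell_d z \<longleftrightarrow> z \<in> Dtau"
proof
  assume ne: "pre_cell z \<noteq> pre_cell_d z"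
  define i where "i = cell_tau z"
  define i' where "i' = cell_tau_d z"
  have i: "i \<in> {1..n}" "bt (i - 1) \<le> z" "z < bt i" using cell_tau_in z by (auto simp: i_def)
  have i': "i' \<in> {1..n}" "bt (i' - 1) < z" "z \<le> bt i'" using cell_tau_d_in z by (auto simp: i'_def)
  have "\<not> i < i'"
  proof
    assume "i < i'"
    then have "bt i \<le> bt (i' - 1)" using bt_le[of i "i' - 1"] i' by auto
    then show False using i i' by simp
  qed
  moreover have "i \<noteq> i'" using ne by (auto simp: i_def i'_def pre_cell_def pre_cell_d_def)
  ultimately have "i' < i" by simp
  then have "bt i' \<le> bt (i - 1)" using bt_le[of i' "i - 1"] i by auto
  then have "z = bt i'" "i' \<in> {1..n - 1}" using \<open>i' < i\<close> i i' by auto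
  then show "z \<in> Dtau" by (auto simp: Dtau_eq)
next
  assume "z \<in> Dtau"
  then obtain m where m: "m \<in> {1..n - 1}" "z = bt m" by (auto simp: Dtau_eq)
  have "cell_tau z = m + 1" using cell_tau_eqI[of "m + 1" z] bt_less[of m "m + 1"] m by auto
  moreover have "cell_tau_d z = m" using cell_tau_d_eqI[of m z] bt_less[of "m - 1" m] m by auto
  moreover have "inv \<tau> (m + 1) \<noteq> inv \<tau> m"
  proof
    assume "inv \<tau> (m + 1) = inv \<tau> m"
    then have "\<tau> (inv \<tau> (m + 1)) = \<tau> (inv \<tau> m)" by (rule arg_cong)
    then show False by simp
  qed
  ultimately show "pre_cell z \<noteq> pre_cell_d z" by (simp add: pre_cell_def pre_cell_d_def)
qed

lemma I_future_inj: "x \<in> {0..<1} \<Longrightarrow> y \<in> {0..<1} \<Longrightarrow> (\<And>j. 0 \<le> j \<Longrightarrow> I x j = I y j) \<Longrightarrow> x = y"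
  by (rule T_itinerary_inj) (auto simp flip: I_nat)

lemma I_d_future_inj: "x \<in> {0<..1} \<Longrightarrow> y \<in> {0<..1} \<Longrightarrow> (\<And>j. 0 \<le> j \<Longrightarrow> I_d x j = I_d y j) \<Longrightarrow> x = y"
  by (rule Td_itinerary_inj) (auto simp flip: I_d_nat)

lemma I_I_d_future_eq: "x \<in> {0..<1} \<Longrightarrow> y \<in> {0<..1} \<Longrightarrow> (\<And>j. 0 \<le> j \<Longrightarrow> I x j = I_d y j) \<Longrightarrow> x = y"
  by (rule T_Td_itinerary_eq) (auto simp flip: I_nat I_d_nat)

lemma I_past_inj: "x \<in> {0..<1} \<Longrightarrow> y \<in> {0..<1} \<Longrightarrow> (\<And>j. j < 0 \<Longrightarrow> I x j = I y j) \<Longrightarrow> x = y"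
  by (rule Tinv_itinerary_inj) (auto simp flip: I_neg)

lemma I_d_past_inj: "x \<in> {0<..1} \<Longrightarrow> y \<in> {0<..1} \<Longrightarrow> (\<And>j. j < 0 \<Longrightarrow> I_d x j = I_d y j) \<Longrightarrow> x = y"
  by (rule Tdinv_itinerary_inj) (auto simp flip: I_d_neg)

lemma I_I_d_past_eq: "x \<in> {0..<1} \<Longrightarrow> y \<in> {0<..1} \<Longrightarrow> (\<And>j. j < 0 \<Longrightarrow> I x j = I_d y j) \<Longrightarrow> x = y"
  by (rule Tinv_Tdinv_itinerary_eq) (auto simp flip: I_neg I_d_neg)

text \<open>Until the orbit of \<open>x\<close> meets a discontinuity, \<open>T\<close> and \<open>T\<^sub>d\<close> move it by the same
  translations.\<close>

lemma I_I_d_agree_future: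
  assumes x: "0 < x" "x < 1" and avoid: "\<And>k. (T ^^ k) x \<notin> D" "\<And>k. (T ^^ k) x \<noteq> 0"
  shows "I x (int k) = I_d x (int k)"
proof -
  have T01: "0 < (T ^^ k) x \<and> (T ^^ k) x < 1" for k
    using T.funpow_in[of x k] avoid(2)[of k] x by fastforce
  have "(Td ^^ k) x = (T ^^ k) x" for k
  proof (induction k rule: less_induct)
    case (less k)
    have "cell ((T ^^ i) x) = cell_d ((Td ^^ i) x)" if "i < k" for i
      using less[OF that] cell_ne_cell_d_iff[of "(T ^^ i) x"] T01[of i] avoid(1)[of i] by auto
    then show ?case
      using displacement_eq[OF T.pw_translation_axioms Td.pw_translation_axioms, of x x k] x by auto
  qed
  then show ?thesis
    using cell_ne_cell_d_iff[of "(T ^^ k) x"] T01[of k] avoid(1)[of k] x by (simp add: I_nat I_d_nat)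
qed

lemma I_I_d_agree_past:
  assumes x: "0 < x" "x < 1" and avoid: "\<And>k. (Tinv ^^ k) x \<notin> Dtau" "\<And>k. (Tinv ^^ k) x \<noteq> 0"
  shows "I x (- int (Suc k)) = I_d x (- int (Suc k))"
proof -
  have T01: "0 < (Tinv ^^ k) x \<and> (Tinv ^^ k) x < 1" for k
    using Tinv.funpow_in[of x k] avoid(2)[of k] x by fastforce
  have "(Tdinv ^^ k) x = (Tinv ^^ k) x" for k
  proof (induction k rule: less_induct)
    case (less k)
    have "pre_cell ((Tinv ^^ i) x) = pre_cell_d ((Tdinv ^^ i) x)" if "i < k" for i
      using less[OF that] pre_cell_ne_pre_cell_d_iff[of "(Tinv ^^ i) x"] T01[of i] avoid(1)[of i] by auto
    then show ?case
      using displacement_eq[OF Tinv.pw_translation_axioms Tdinv.pw_translation_axioms, of x x k] x by auto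
  qed
  then show ?thesis
    using pre_cell_ne_pre_cell_d_iff[of "(Tinv ^^ k) x"] T01[of k] avoid(1)[of k] x I_neg[of x k] I_d_neg[of x k]
    by simp
qed

lemma D_orbit_avoids_0:
  assumes d: "d \<in> D" and k: "2 \<le> k"
  shows "(T ^^ k) d \<noteq> 0"
proof
  assume e: "(T ^^ k) d = 0"
  have kk: "k = Suc (k - 1)" using k by simp
  have "T ((T ^^ (k - 1)) d) = 0" using e by (subst (asm) kk) simp
  then have "(T ^^ (k - 1)) d \<in> D"
    using T_eq_0_imp_in_D T.funpow_in[of d "k - 1"] D_in_open[OF d] by auto
  moreover have "1 \<le> k - 1" using k by simp
  ultimately show False using D_orbit_avoids_D[OF d] by blast
qed

lemma T_b: "i \<in> {1..n} \<Longrightarrow> T (b (i - 1)) = bt (\<tau> i - 1) \<and> cell (b (i - 1)) = i"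
  using cell_eqI[of i "b (i - 1)"] b_less[of "i - 1" i] by (auto simp: T_eq_transl transl_def)

lemma Td_b: "i \<in> {1..n} \<Longrightarrow> Td (b i) = bt (\<tau> i) \<and> cell_d (b i) = i"
  using cell_d_eqI[of i "b i"] b_less[of "i - 1" i] b_diff[of i] bt_diff[of i]
  by (auto simp: Td_eq_transl transl_def)

lemma Tinv_0: "Tinv 0 \<in> D \<and> T (Tinv 0) = 0"
  using Tinv_on_cell[of 0] T_eq_0_imp_in_D by auto

lemma bt_in_D_orbit:
  assumes m: "m \<in> {1..n - 1}"
  shows "\<exists>d\<in>D. \<exists>e. 1 \<le> e \<and> bt m = (T ^^ e) d"
proof -
  define i where "i = inv \<tau> (m + 1)"
  have i: "i \<in> {1..n}" "\<tau> i = m + 1" using inv_tau_in[of "m + 1"] m by (auto simp: i_def)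
  have Tb: "T (b (i - 1)) = bt m" using T_b[OF i(1)] i by simp
  show ?thesis
  proof (cases "i = 1")
    case False
    then have "b (i - 1) \<in> D" using i unfolding D_eq by (intro imageI) auto
    then show ?thesis using Tb by (intro bexI[of _ "b (i - 1)"] exI[of _ 1]) auto
  next
    case True
    then have "bt m = (T ^^ 2) (Tinv 0)" using Tb Tinv_0 by (simp add: numeral_2_eq_2)
    then show ?thesis using Tinv_0 by (intro bexI[of _ "Tinv 0"] exI[of _ 2]) auto
  qed
qed

lemma bt_pos: "m \<in> {1..n} \<Longrightarrow> 0 < bt m"
  using bt_less[of 0 m] by auto

lemma I_I_d_bt_future:
  assumes m: "m \<in> {1..n - 1}" and j: "0 \<le> j"
  shows "I (bt m) j = I_d (bt m) j"
proof -
  obtain d e where de: "d \<in> D" "1 \<le> e" "bt m = (T ^^ e) d" using bt_in_D_orbit[OF m] by blast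
  have pw: "(T ^^ k) (bt m) = (T ^^ (k + e)) d" for k by (simp add: de(3) funpow_add)
  have "(T ^^ k) (bt m) \<notin> D" for k
    using D_orbit_avoids_D[OF de(1), of "k + e"] de(2) pw[of k] by auto
  moreover have pos: "0 < bt m" using bt_pos[of m] m by auto
  moreover have "(T ^^ k) (bt m) \<noteq> 0" for k
    using pos D_orbit_avoids_0[OF de(1), of "k + e"] de(2) pw[of k] by (cases k) auto
  moreover have "bt m < 1" using bt_less[of m n] btn m by auto
  moreover obtain k where "j = int k" using j nonneg_eq_int by blast
  ultimately show ?thesis using I_I_d_agree_future by blast
qed

lemma I_I_d_b_past:
  assumes m: "m \<in> {1..n - 1}" and j: "j < 0"
  shows "I (b m) j = I_d (b m) j"
proof -
  have x: "0 < b m" "b m < 1" "b m \<in> D"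
    using m b_less[of 0 m] b_less[of m n] bn by (auto simp: D_eq)
  have no_return: False if "(Tinv ^^ k) (b m) = (T ^^ e) d" "d \<in> D" "1 \<le> e" for k e d
  proof -
    have "b m = (T ^^ k) ((Tinv ^^ k) (b m))" using funpow_T_Tinv[of "b m" k] x by simp
    also have "\<dots> = (T ^^ (k + e)) d" using that(1) by (simp add: funpow_add)
    finally show False using D_orbit_avoids_D[OF that(2), of "k + e"] x(3) that(3) by simp
  qed
  have "(Tinv ^^ k) (b m) \<notin> Dtau" for k
  proof
    assume "(Tinv ^^ k) (b m) \<in> Dtau"
    then obtain m' where m': "m' \<in> {1..n - 1}" "(Tinv ^^ k) (b m) = bt m'" by (auto simp: Dtau_eq)
    then obtain d e where "d \<in> D" "1 \<le> e" "bt m' = (T ^^ e) d" using bt_in_D_orbit by blast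
    then show False using no_return[of k e d] m' by simp
  qed
  moreover have "(Tinv ^^ k) (b m) \<noteq> 0" for k
    using no_return[of k 1 "Tinv 0"] Tinv_0 by auto
  moreover obtain k where "j = - int (Suc k)" using int_neg_eq[OF j] by blast
  ultimately show ?thesis using I_I_d_agree_past[OF x(1,2)] by blast
qed

subsection \<open>Asymptotic pairs of itineraries\<close>

definition is_itin :: "(int \<Rightarrow> nat) \<Rightarrow> bool" where
  "is_itin \<alpha> \<longleftrightarrow> (\<exists>x\<in>{0..<1}. \<alpha> = I x) \<or> (\<exists>x\<in>{0<..1}. \<alpha> = I_d x)"

lemma I_minus_1: "x \<in> {0..<1} \<Longrightarrow> I x (- 1) = pre_cell x"
  using I_neg[of x 0] by simp

lemma I_d_minus_1: "x \<in> {0<..1} \<Longrightarrow> I_d x (- 1) = pre_cell_d x"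
  using I_d_neg[of x 0] by simp

lemma I_0: "x \<in> {0..<1} \<Longrightarrow> I x 0 = cell x"
  using I_nat[of x 0] by simp

lemma I_d_0: "x \<in> {0<..1} \<Longrightarrow> I_d x 0 = cell_d x"
  using I_d_nat[of x 0] by simp

lemma I_pos_asymp_eq:
  assumes x: "x \<in> {0..<1}" and y: "y \<in> {0..<1}" and a: "pos_asymp (I x) (I y)"
  shows "I x = I y"
proof -
  obtain N where N: "\<And>j. N \<le> j \<Longrightarrow> I x j = I y j" using a unfolding pos_asymp_def by blast
  define x' where "x' = int_iter T {0..<1} (N) x"
  define y' where "y' = int_iter T {0..<1} (N) y"
  have x': "x' \<in> {0..<1}" "I x' = shiftk (N) (I x)"
    using shiftk_I[OF x, of "N"] by (auto simp: x'_def)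
  have y': "y' \<in> {0..<1}" "I y' = shiftk (N) (I y)"
    using shiftk_I[OF y, of "N"] by (auto simp: y'_def)
  have "x' = y'" by (rule I_future_inj[OF x'(1) y'(1)]) (simp add: x'(2) y'(2) shiftk_def N)
  then show ?thesis using x'(2) y'(2) shiftk_inv[of "N"] by (metis minus_minus)
qed

lemma I_d_pos_asymp_eq:
  assumes x: "x \<in> {0<..1}" and y: "y \<in> {0<..1}" and a: "pos_asymp (I_d x) (I_d y)"
  shows "I_d x = I_d y"
proof -
  obtain N where N: "\<And>j. N \<le> j \<Longrightarrow> I_d x j = I_d y j" using a unfolding pos_asymp_def by blast
  define x' where "x' = int_iter Td {0<..1} (N) x"
  define y' where "y' = int_iter Td {0<..1} (N) y"
  have x': "x' \<in> {0<..1}" "I_d x' = shiftk (N) (I_d x)"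
    using shiftk_I_d[OF x, of "N"] by (auto simp: x'_def)
  have y': "y' \<in> {0<..1}" "I_d y' = shiftk (N) (I_d y)"
    using shiftk_I_d[OF y, of "N"] by (auto simp: y'_def)
  have "x' = y'" by (rule I_d_future_inj[OF x'(1) y'(1)]) (simp add: x'(2) y'(2) shiftk_def N)
  then show ?thesis using x'(2) y'(2) shiftk_inv[of "N"] by (metis minus_minus)
qed

lemma I_neg_asymp_eq:
  assumes x: "x \<in> {0..<1}" and y: "y \<in> {0..<1}" and a: "neg_asymp (I x) (I y)"
  shows "I x = I y"
proof -
  obtain N where N: "\<And>j. j \<le> - N \<Longrightarrow> I x j = I y j" using a unfolding neg_asymp_def by blast
  define x' where "x' = int_iter T {0..<1} (- N) x"
  define y' where "y' = int_iter T {0..<1} (- N) y"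
  have x': "x' \<in> {0..<1}" "I x' = shiftk (- N) (I x)"
    using shiftk_I[OF x, of "- N"] by (auto simp: x'_def)
  have y': "y' \<in> {0..<1}" "I y' = shiftk (- N) (I y)"
    using shiftk_I[OF y, of "- N"] by (auto simp: y'_def)
  have "x' = y'" by (rule I_past_inj[OF x'(1) y'(1)]) (simp add: x'(2) y'(2) shiftk_def N)
  then show ?thesis using x'(2) y'(2) shiftk_inv[of "- N"] by (metis minus_minus)
qed

lemma I_d_neg_asymp_eq:
  assumes x: "x \<in> {0<..1}" and y: "y \<in> {0<..1}" and a: "neg_asymp (I_d x) (I_d y)"
  shows "I_d x = I_d y"
proof -
  obtain N where N: "\<And>j. j \<le> - N \<Longrightarrow> I_d x j = I_d y j" using a unfolding neg_asymp_def by blast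
  define x' where "x' = int_iter Td {0<..1} (- N) x"
  define y' where "y' = int_iter Td {0<..1} (- N) y"
  have x': "x' \<in> {0<..1}" "I_d x' = shiftk (- N) (I_d x)"
    using shiftk_I_d[OF x, of "- N"] by (auto simp: x'_def)
  have y': "y' \<in> {0<..1}" "I_d y' = shiftk (- N) (I_d y)"
    using shiftk_I_d[OF y, of "- N"] by (auto simp: y'_def)
  have "x' = y'" by (rule I_d_past_inj[OF x'(1) y'(1)]) (simp add: x'(2) y'(2) shiftk_def N)
  then show ?thesis using x'(2) y'(2) shiftk_inv[of "- N"] by (metis minus_minus)
qed

text \<open>Shifting \<open>I x\<close> and \<open>I\<^sub>d y\<close> so that they agree on the future and differ at time
  \<open>-1\<close> turns \<open>x, y\<close> into one point whose two backward itineraries split immediately, i.e.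
  into a point of \<open>D\<^sup>\<tau>\<close>.\<close>

lemma I_I_d_pos_asymp:
  assumes x: "x \<in> {0..<1}" and y: "y \<in> {0<..1}" and ne: "I x \<noteq> I_d y" and pa: "pos_asymp (I x) (I_d y)"
  shows "\<exists>m\<in>{1..n - 1}. \<exists>k. I x = shiftk k (I (bt m)) \<and> I_d y = shiftk k (I_d (bt m))"
proof -
  obtain N where "\<And>j. N \<le> j \<Longrightarrow> I x j = I_d y j" using pa unfolding pos_asymp_def by blast
  then obtain k where k: "shiftk k (I x) (- 1) \<noteq> shiftk k (I_d y) (- 1)"
    "\<And>j. 0 \<le> j \<Longrightarrow> shiftk k (I x) j = shiftk k (I_d y) j"
    using shiftk_last_disagreement[OF ne] by blast
  define r where "r = int_iter T {0..<1} k x"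
  define r' where "r' = int_iter Td {0<..1} k y"
  have r: "shiftk k (I x) = I r" "r \<in> {0..<1}" using shiftk_I[OF x] by (auto simp: r_def)
  have r': "shiftk k (I_d y) = I_d r'" "r' \<in> {0<..1}" using shiftk_I_d[OF y] by (auto simp: r'_def)
  have rr: "r = r'" using I_I_d_future_eq[OF r(2) r'(2)] k(2) r r' by simp
  then have "pre_cell r \<noteq> pre_cell_d r" using k(1) r r' I_minus_1 I_d_minus_1 by simp
  then obtain m where m: "m \<in> {1..n - 1}" "r = bt m"
    using pre_cell_ne_pre_cell_d_iff[of r] r(2) r'(2) rr by (auto simp: Dtau_eq)
  have "I x = shiftk (- k) (I r)" "I_d y = shiftk (- k) (I_d r)"
    using r(1) r'(1) rr shiftk_inv by metis+
  then show ?thesis using m by blast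
qed

lemma I_I_d_neg_asymp:
  assumes x: "x \<in> {0..<1}" and y: "y \<in> {0<..1}" and ne: "I x \<noteq> I_d y" and na: "neg_asymp (I x) (I_d y)"
  shows "\<exists>m\<in>{1..n - 1}. \<exists>k. I x = shiftk k (I (b m)) \<and> I_d y = shiftk k (I_d (b m))"
proof -
  obtain N where "\<And>j. j \<le> - N \<Longrightarrow> I x j = I_d y j" using na unfolding neg_asymp_def by blast
  then obtain k where k: "shiftk k (I x) 0 \<noteq> shiftk k (I_d y) 0"
    "\<And>j. j < 0 \<Longrightarrow> shiftk k (I x) j = shiftk k (I_d y) j"
    using shiftk_first_disagreement[OF ne] by blast
  define r where "r = int_iter T {0..<1} k x"
  define r' where "r' = int_iter Td {0<..1} k y"
  have r: "shiftk k (I x) = I r" "r \<in> {0..<1}" using shiftk_I[OF x] by (auto simp: r_def)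
  have r': "shiftk k (I_d y) = I_d r'" "r' \<in> {0<..1}" using shiftk_I_d[OF y] by (auto simp: r'_def)
  have rr: "r = r'" using I_I_d_past_eq[OF r(2) r'(2)] k(2) r r' by simp
  then have "cell r \<noteq> cell_d r" using k(1) r r' I_0 I_d_0 by simp
  then obtain m where m: "m \<in> {1..n - 1}" "r = b m"
    using cell_ne_cell_d_iff[of r] r(2) r'(2) rr by (auto simp: D_eq)
  have "I x = shiftk (- k) (I r)" "I_d y = shiftk (- k) (I_d r)"
    using r(1) r'(1) rr shiftk_inv by metis+
  then show ?thesis using m by blast
qed

lemma is_itin_pair_cases:
  assumes "is_itin \<alpha>" "is_itin \<beta>" "\<alpha> \<noteq> \<beta>" "A \<alpha> \<beta>"
    and sym: "\<And>\<alpha> \<beta>. A \<alpha> \<beta> \<Longrightarrow> A \<beta> \<alpha>"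
    and I_eq: "\<And>x y. x \<in> {0..<1} \<Longrightarrow> y \<in> {0..<1} \<Longrightarrow> A (I x) (I y) \<Longrightarrow> I x = I y"
    and I_d_eq: "\<And>x y. x \<in> {0<..1} \<Longrightarrow> y \<in> {0<..1} \<Longrightarrow> A (I_d x) (I_d y) \<Longrightarrow> I_d x = I_d y"
    and mixed: "\<And>x y. x \<in> {0..<1} \<Longrightarrow> y \<in> {0<..1} \<Longrightarrow> I x \<noteq> I_d y \<Longrightarrow> A (I x) (I_d y) \<Longrightarrow>
      \<exists>m\<in>{1..n - 1}. \<exists>k. I x = shiftk k (I (c m)) \<and> I_d y = shiftk k (I_d (c m))"
  shows "\<exists>m\<in>{1..n - 1}. \<exists>k. {\<alpha>, \<beta>} = {shiftk k (I (c m)), shiftk k (I_d (c m))}"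
  using assms(1,2)
proof (elim is_itin_def[THEN iffD1, elim_format] disjE bexE)
  fix x y assume xy: "x \<in> {0<..1}" "y \<in> {0..<1}" "\<alpha> = I_d x" "\<beta> = I y"
  then obtain m k where mk: "m \<in> {1..n - 1}" "I y = shiftk k (I (c m))" "I_d x = shiftk k (I_d (c m))"
    using mixed[of y x] sym[of \<alpha> \<beta>] assms(3,4) by auto
  then have "{\<alpha>, \<beta>} = {shiftk k (I (c m)), shiftk k (I_d (c m))}"
    using xy by (simp add: insert_commute)
  then show ?thesis using mk(1) by blast
qed (use assms(3,4) I_eq I_d_eq mixed in \<open>fastforce+\<close>)

lemma pos_asymp_imp_bt_pair:
  "is_itin \<alpha> \<Longrightarrow> is_itin \<beta> \<Longrightarrow> \<alpha> \<noteq> \<beta> \<Longrightarrow> pos_asymp \<alpha> \<beta> \<Longrightarrow>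
    \<exists>m\<in>{1..n - 1}. \<exists>k. {\<alpha>, \<beta>} = {shiftk k (I (bt m)), shiftk k (I_d (bt m))}"
  by (rule is_itin_pair_cases[OF _ _ _ _ pos_asymp_sym I_pos_asymp_eq I_d_pos_asymp_eq I_I_d_pos_asymp])

lemma neg_asymp_imp_b_pair:
  "is_itin \<alpha> \<Longrightarrow> is_itin \<beta> \<Longrightarrow> \<alpha> \<noteq> \<beta> \<Longrightarrow> neg_asymp \<alpha> \<beta> \<Longrightarrow>
    \<exists>m\<in>{1..n - 1}. \<exists>k. {\<alpha>, \<beta>} = {shiftk k (I (b m)), shiftk k (I_d (b m))}"
  by (rule is_itin_pair_cases[OF _ _ _ _ neg_asymp_sym I_neg_asymp_eq I_d_neg_asymp_eq I_I_d_neg_asymp])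

lemma bt_pair_pos_asymp:
  assumes m: "m \<in> {1..n - 1}" and e: "{\<alpha>, \<beta>} = {shiftk k (I (bt m)), shiftk k (I_d (bt m))}"
  shows "pos_asymp \<alpha> \<beta>"
proof -
  have "shiftk k (I (bt m)) i = shiftk k (I_d (bt m)) i" if "- k \<le> i" for i
    using I_I_d_bt_future[OF m, of "i + k"] that by (simp add: shiftk_def)
  then show ?thesis using e unfolding pos_asymp_def doubleton_eq_iff by metis
qed

lemma b_pair_neg_asymp:
  assumes m: "m \<in> {1..n - 1}" and e: "{\<alpha>, \<beta>} = {shiftk k (I (b m)), shiftk k (I_d (b m))}"
  shows "neg_asymp \<alpha> \<beta>"
proof -
  have "shiftk k (I (b m)) i = shiftk k (I_d (b m)) i" if "i \<le> - (k + 1)" for i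
    using I_I_d_b_past[OF m, of "i + k"] that by (simp add: shiftk_def)
  then show ?thesis using e unfolding neg_asymp_def doubleton_eq_iff by metis
qed

subsection \<open>Regular points and split permutations\<close>

lemma regular_if_orbit_avoids_D:
  assumes x: "0 < x" "x < 1" and fwd: "\<And>k. (T ^^ k) x \<notin> D" and bwd: "\<And>k. (Tinv ^^ Suc k) x \<notin> D"
  shows "x \<in> R"
proof -
  have "x \<noteq> int_iter T {0..<1} k d" if "d \<in> D" for k d
  proof
    assume xd: "x = int_iter T {0..<1} k d"
    have "d \<in> {0..<1}" using D_in_open[OF that] by auto
    then have "d = int_iter T {0..<1} (- k) x" using int_iter_add[OF T_bij, of d "- k" k] xd by simp
    moreover have "int_iter T {0..<1} (- k) x \<notin> D"
    proof (cases "0 \<le> - k")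
      case True
      then obtain m where "- k = int m" using nonneg_eq_int by blast
      then show ?thesis using fwd[of m] by (simp add: int_iter_of_nat)
    next
      case False
      then obtain m where m: "- k = - int (Suc m)" using int_neg_eq by force
      have "int_iter T {0..<1} (- k) x = (Tinv ^^ Suc m) x"
        unfolding m int_iter_neg using funpow_inv_into_T[of x "Suc m"] x by simp
      then show ?thesis using bwd[of m] by simp
    qed
    ultimately show False using that by simp
  qed
  then show ?thesis using x by (auto simp: iet_R_def iet_Dinf_def iet_Tpow_eq)
qed

lemma I_eq_I_d_regular:
  assumes x: "0 < x" "x < 1" and e: "I x = I_d x"
  shows "x \<in> R"
proof (rule regular_if_orbit_avoids_D[OF x])
  have fwd: "(Td ^^ k) x = (T ^^ k) x" for k
    using displacement_eq[OF T.pw_translation_axioms Td.pw_translation_axioms, of x x k] x e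
    by (auto simp flip: I_nat I_d_nat)
  have bwd: "(Tdinv ^^ k) x = (Tinv ^^ k) x" for k
    using displacement_eq[OF Tinv.pw_translation_axioms Tdinv.pw_translation_axioms, of x x k] x e
    by (auto simp flip: I_neg I_d_neg)
  show "(T ^^ k) x \<notin> D" for k
  proof -
    have "0 < (T ^^ k) x" "(T ^^ k) x < 1"
      using T.funpow_in[of x k] Td.funpow_in[of x k] fwd[of k] x by auto
    moreover have "cell ((T ^^ k) x) = cell_d ((T ^^ k) x)"
      using I_nat[of x k] I_d_nat[of x k] fwd[of k] e x by simp
    ultimately show ?thesis using cell_ne_cell_d_iff by blast
  qed
  show "(Tinv ^^ Suc k) x \<notin> D" for k
  proof -
    define z where "z = (Tinv ^^ k) x"
    have z: "z \<in> {0..<1}" "z \<in> {0<..1}" "Tdinv z = Tinv z"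
      using Tinv.funpow_in[of x k] Tdinv.funpow_in[of x k] bwd[of k] bwd[of "Suc k"] x by (auto simp: z_def)
    have "0 < Tinv z" "Tinv z < 1" using Tinv.maps_into[of z] Tdinv.maps_into[of z] z by auto
    moreover have "cell (Tinv z) = cell_d (Tinv z)"
      using Tinv_on_cell[of z] Tdinv_on_cell[of z] z I_neg[of x k] I_d_neg[of x k] bwd[of k] e x
      by (simp add: z_def)
    ultimately have "Tinv z \<notin> D" using cell_ne_cell_d_iff by blast
    then show ?thesis by (simp add: z_def)
  qed
qed

lemma I_eq_I_d_imp_regular:
  assumes x: "x \<in> {0..<1}" and y: "y \<in> {0<..1}" and e: "I x = I_d y"
  shows "x = y \<and> x \<in> R"
  using I_I_d_future_eq[OF x y] e I_eq_I_d_regular[of x] x y by auto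

lemma Tinv_bt: "m \<in> {1..n - 1} \<Longrightarrow> Tinv (bt m) = b (inv \<tau> (m + 1) - 1)"
  using cell_tau_eqI[of "m + 1" "bt m"] bt_less[of m "m + 1"]
  by (auto simp: Tinv_def pre_cell_def transl_def)

lemma Tdinv_bt: "m \<in> {1..n - 1} \<Longrightarrow> Tdinv (bt m) = b (inv \<tau> m)"
  using cell_tau_d_eqI[of m "bt m"] bt_less[of "m - 1" m] b_diff[of "inv \<tau> m"] bt_diff[of "inv \<tau> m"] inv_tau_in[of m]
  by (auto simp: Tdinv_def pre_cell_d_def transl_def)

lemma Td_of_T_preimage_0:
  assumes c: "c \<in> D" and T0: "T c = 0"
  shows "Td c \<notin> D \<and> (Td c = 1 \<longrightarrow> inv \<tau> 1 = inv \<tau> n + 1)"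
proof -
  obtain e where e: "e \<in> {1..n - 1}" "c = b e" using c by (auto simp: D_eq)
  have e1: "e + 1 \<in> {1..n}" using e by auto
  then have "bt (\<tau> (e + 1) - 1) = bt 0" using T_b[of "e + 1"] e T0 by simp
  then have "\<tau> (e + 1) - 1 = 0" using bt_inj[of "\<tau> (e + 1) - 1" 0] tau_in[OF e1] by auto
  moreover have "1 \<le> \<tau> (e + 1)" using tau_in[OF e1] by simp
  ultimately have "\<tau> (e + 1) = 1" by arith
  then have inv1: "inv \<tau> 1 = e + 1" using inv_tau[of "e + 1"] by simp
  have e0: "e \<in> {1..n}" using e by auto
  then have Td: "Td c = bt (\<tau> e)" using Td_b[of e] by (simp add: e(2))
  have "\<tau> e = n" if "Td c = 1" using bt_inj[of "\<tau> e" n] tau_in[OF e0] that Td btn by auto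
  then have "Td c = 1 \<longrightarrow> inv \<tau> 1 = inv \<tau> n + 1" using inv1 inv_tau[of e] by auto
  moreover have "Td c \<notin> D"
  proof
    assume TD: "Td c \<in> D"
    then have "\<tau> e \<noteq> n" using D_in_open Td btn by force
    then have "\<tau> e \<in> {1..n - 1}" using tau_in[OF e0] by auto
    then obtain d k where "d \<in> D" "1 \<le> k" "bt (\<tau> e) = (T ^^ k) d" using bt_in_D_orbit by blast
    then show False using D_orbit_avoids_D TD Td by auto
  qed
  ultimately show ?thesis by blast
qed

lemma split_Tinv_bt_ne_Tdinv_bt:
  assumes split: "split_perm n \<tau>" and m: "m \<in> {1..n - 1}"
  shows "Tinv (bt m) \<noteq> Tdinv (bt m)"
proof -
  have im: "inv \<tau> m \<in> {1..n}" "inv \<tau> (m + 1) \<in> {1..n}" using inv_tau_in m by auto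
  have "inv \<tau> (m + 1) - 1 \<noteq> inv \<tau> m"
  proof
    assume "inv \<tau> (m + 1) - 1 = inv \<tau> m"
    then have i: "inv \<tau> (m + 1) = inv \<tau> m + 1" "inv \<tau> m \<in> {1..n - 1}" using im by auto
    have "\<tau> (inv \<tau> m + 1) = \<tau> (inv \<tau> m) + 1" using arg_cong[OF i(1), of \<tau>] by simp
    moreover have "\<tau> (inv \<tau> m + 1) \<noteq> \<tau> (inv \<tau> m) + 1"
      using split i(2) unfolding split_perm_def by blast
    ultimately show False by simp
  qed
  then show ?thesis using Tinv_bt[OF m] Tdinv_bt[OF m] b_inj[of "inv \<tau> (m + 1) - 1" "inv \<tau> m"] im
    by fastforce
qed

lemma past_agreement_common_preimage:
  assumes m: "m \<in> {1..n - 1}" and agree: "\<And>j. j \<le> - N \<Longrightarrow> I (bt m) j = I_d (bt m) j"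
  shows "\<exists>w M. w \<in> {0..<1} \<and> w \<in> {0<..1} \<and> (T ^^ M) w = Tinv (bt m) \<and> (Td ^^ M) w = Tdinv (bt m)"
proof -
  define x where "x = bt m"
  have x: "0 < x" "x < 1" using bt_pos[of m] bt_less[of m n] btn m by (auto simp: x_def)
  have uA: "Tinv x \<in> {0..<1}" and vB: "Tdinv x \<in> {0<..1}"
    using Tinv.maps_into Tdinv.maps_into x by auto
  define M where "M = nat N"
  define w where "w = (Tinv ^^ M) (Tinv x)"
  have "w = (Tdinv ^^ M) (Tdinv x)"
  proof (unfold w_def, rule Tinv_Tdinv_itinerary_eq)
    fix j
    have "- int (Suc (j + M + 1)) \<le> - N" by (simp add: M_def)
    then show "pre_cell ((Tinv ^^ j) ((Tinv ^^ M) (Tinv x))) = pre_cell_d ((Tdinv ^^ j) ((Tdinv ^^ M) (Tdinv x)))"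
      using agree I_neg[of x "j + M + 1"] I_d_neg[of x "j + M + 1"] x
      by (simp add: x_def funpow_add funpow_Suc_right del: funpow.simps)
  qed (use Tinv.funpow_in[OF uA] Tdinv.funpow_in[OF vB] in auto)
  moreover have "w \<in> {0..<1}" using Tinv.funpow_in[OF uA] by (simp add: w_def)
  ultimately show ?thesis
    using funpow_T_Tinv[OF uA, of M] funpow_Td_Tdinv[OF vB, of M] Tdinv.funpow_in[OF vB, of M]
    by (intro exI[of _ w] exI[of _ M]) (simp add: x_def w_def)
qed

lemma T_Td_separate_in_D:
  assumes w: "w \<in> {0..<1}" "w \<in> {0<..1}" and ne: "(T ^^ M) w \<noteq> (Td ^^ M) w"
  shows "\<exists>j<M. (T ^^ j) w \<in> D \<and> (Td ^^ j) w = (T ^^ j) w"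
proof -
  obtain j where j: "j < M" "(T ^^ j) w = (Td ^^ j) w" "T ((T ^^ j) w) \<noteq> Td ((T ^^ j) w)"
    using first_divergence[where f = T and g = Td and M = M and w = w] ne by auto
  have "(T ^^ j) w \<in> {0..<1}" using T.funpow_in[OF w(1)] .
  moreover have "(T ^^ j) w \<in> {0<..1}" using Td.funpow_in[OF w(2), of j] j(2) by simp
  ultimately have "0 < (T ^^ j) w" "(T ^^ j) w < 1" "cell ((T ^^ j) w) \<noteq> cell_d ((T ^^ j) w)"
    using j(3) by (auto simp: T_eq_transl Td_eq_transl)
  then have "(T ^^ j) w \<in> D" using cell_ne_cell_d_iff by blast
  then show ?thesis using j by auto
qed

text \<open>If the two itineraries of \<open>b\<^sup>\<tau>\<^sub>m\<close> agreed in the far past, its two preimages, which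
  differ by splitness, would lie on the \<open>T\<close>- and the \<open>T\<^sub>d\<close>-orbit of one point. These orbits
  separate at a point \<open>c\<in>D\<close>, and the Keane condition leaves only \<open>T c = 0\<close> with
  \<open>T\<^sub>d c = 1\<close>, which is excluded by \<open>\<tau>\<^sup>-\<^sup>1(1) \<noteq> \<tau>\<^sup>-\<^sup>1(n) + 1\<close>.\<close>

lemma fully_split_past_disagree:
  assumes m: "m \<in> {1..n - 1}" and fsp: "fully_split_perm n \<tau>"
    and agree: "\<And>j. j \<le> - N \<Longrightarrow> I (bt m) j = I_d (bt m) j"
  shows False
proof -
  define u where "u = Tinv (bt m)"
  define v where "v = Tdinv (bt m)"
  have uv: "u = b (inv \<tau> (m + 1) - 1)" "v = b (inv \<tau> m)"
    using Tinv_bt[OF m] Tdinv_bt[OF m] by (simp_all add: u_def v_def)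
  have "u \<noteq> v" using split_Tinv_bt_ne_Tdinv_bt fsp m by (simp add: u_def v_def fully_split_perm_def)
  obtain w M where w: "w \<in> {0..<1}" "w \<in> {0<..1}" and Tw: "(T ^^ M) w = u" "(Td ^^ M) w = v"
    using past_agreement_common_preimage[of m N, OF m agree] unfolding u_def v_def by blast
  then obtain j where j: "j < M" "(T ^^ j) w \<in> D" "(Td ^^ j) w = (T ^^ j) w"
    using T_Td_separate_in_D[OF w] \<open>u \<noteq> v\<close> by auto
  define c where "c = (T ^^ j) w"
  have cD: "c \<in> D" using j(2) by (simp add: c_def)
  have "(T ^^ M) w = (T ^^ (M - j + j)) w" using j(1) by simp
  also have "\<dots> = (T ^^ (M - j)) c" by (simp only: funpow_add o_apply c_def)
  finally have uK: "u = (T ^^ (M - j)) c" using Tw(1) by simp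
  have im: "inv \<tau> m \<in> {1..n}" "inv \<tau> (m + 1) \<in> {1..n}" using inv_tau_in m by auto
  show False
  proof (cases "inv \<tau> (m + 1) = 1")
    case False
    then have "inv \<tau> (m + 1) - 1 \<in> {1..n - 1}" using im by auto
    then have "u \<in> D" unfolding uv D_eq by (rule imageI)
    moreover have "1 \<le> M - j" using j(1) by simp
    ultimately show False using D_orbit_avoids_D[OF cD] uK by blast
  next
    case True
    then have u0: "u = 0" using uv by simp
    have "\<not> 2 \<le> M - j" using D_orbit_avoids_0[OF cD, of "M - j"] uK u0 by auto
    then have "M = Suc j" using j(1) by simp
    then have Tc: "T c = 0" "v = Td c" using uK u0 Tw(2) j(3) by (simp_all add: c_def)
    show False
    proof (cases "inv \<tau> m = n")
      case True
      then show False
        using Td_of_T_preimage_0[OF cD] Tc uv fsp by (simp add: bn fully_split_perm_def)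
    next
      case False
      then have "inv \<tau> m \<in> {1..n - 1}" using im by auto
      then have "v \<in> D" unfolding uv D_eq by (rule imageI)
      then show False using Td_of_T_preimage_0[OF cD] Tc by simp
    qed
  qed
qed

lemma fully_split_doubly_asymp_eq:
  assumes fsp: "fully_split_perm n \<tau>" and itin: "is_itin \<alpha>" "is_itin \<beta>"
    and da: "doubly_asymp \<alpha> \<beta>"
  shows "\<alpha> = \<beta>"
proof (rule ccontr)
  assume ne: "\<alpha> \<noteq> \<beta>"
  obtain m k where m: "m \<in> {1..n - 1}" and mk: "{\<alpha>, \<beta>} = {shiftk k (I (bt m)), shiftk k (I_d (bt m))}"
    using pos_asymp_imp_bt_pair[OF itin ne] da by (auto simp: doubly_asymp_def)
  obtain N where N: "\<And>i. i \<le> - N \<Longrightarrow> \<alpha> i = \<beta> i"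
    using da unfolding doubly_asymp_def neg_asymp_def by blast
  have "I (bt m) j = I_d (bt m) j" if j: "j \<le> - (N - k)" for j
  proof -
    have h: "\<alpha> (j - k) = \<beta> (j - k)" using N[of "j - k"] j by simp
    from mk consider "\<alpha> = shiftk k (I (bt m))" "\<beta> = shiftk k (I_d (bt m))"
      | "\<alpha> = shiftk k (I_d (bt m))" "\<beta> = shiftk k (I (bt m))" by (auto simp: doubleton_eq_iff)
    then show ?thesis using h by cases (auto simp: shiftk_def)
  qed
  then show False using fully_split_past_disagree[OF m fsp] by blast
qed

lemma not_split_doubly_asymp_pair:
  assumes "\<not> split_perm n \<tau>"
  shows "\<exists>j\<in>{1..n - 1}. I (b j) \<noteq> I_d (b j) \<and> doubly_asymp (I (b j)) (I_d (b j))"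
proof -
  obtain j where j: "j \<in> {1..n - 1}" "\<tau> (j + 1) = \<tau> j + 1"
    using assms unfolding split_perm_def by blast
  have j1: "j + 1 \<in> {1..n}" "j \<in> {1..n}" using j by auto
  define x where "x = b j"
  have x: "0 < x" "x < 1" "x \<in> D"
    using j b_less[of 0 j] b_less[of j n] bn by (auto simp: x_def D_eq)
  have "I x 0 \<noteq> I_d x 0"
    using I_0[of x] I_d_0[of x] T_b[OF j1(1)] Td_b[OF j1(2)] x by (simp add: x_def)
  then have ne: "I x \<noteq> I_d x" by auto
  have neg: "neg_asymp (I x) (I_d x)"
    unfolding neg_asymp_def using I_I_d_b_past[OF j(1)] by (intro exI[of _ 1]) (auto simp: x_def)
  define y where "y = T x"
  have y: "y = bt (\<tau> j)" "Td x = y"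
    using T_b[OF j1(1)] Td_b[OF j1(2)] j(2) by (simp_all add: x_def y_def)
  have y01: "0 < y" "y < 1"
    using bt_pos[OF tau_in[OF j1(2)]] T.maps_into[of x] x y(1) by (auto simp: y_def)
  have orbit: "(T ^^ k) y = (T ^^ Suc k) x" for k
    by (simp add: y_def funpow_Suc_right del: funpow.simps)
  have "(T ^^ k) y \<notin> D" for k using D_orbit_avoids_D[OF x(3), of "Suc k"] orbit[of k] by auto
  moreover have "(T ^^ k) y \<noteq> 0" for k
    using y01(1) D_orbit_avoids_0[OF x(3), of "Suc k"] orbit[of k] by (cases k) auto
  ultimately have agree: "I y (int k) = I_d y (int k)" for k
    using I_I_d_agree_future[OF y01] by blast
  have "I x i = I_d x i" if "1 \<le> i" for i
  proof -
    define k where "k = nat (i - 1)"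
    have k: "i = int (Suc k)" using that by (simp add: k_def)
    have "I x i = I y (int k)"
      using I_nat[of x "Suc k"] I_nat[of y k] orbit[of k] x y01 by (simp add: k)
    moreover have "I_d x i = I_d y (int k)"
      using I_d_nat[of x "Suc k"] I_d_nat[of y k] x y01 y(2) by (simp add: k funpow_Suc_right del: funpow.simps)
    ultimately show ?thesis using agree by simp
  qed
  then have "pos_asymp (I x) (I_d x)" unfolding pos_asymp_def by blast
  then show ?thesis using j(1) ne neg by (auto simp: doubly_asymp_def x_def)
qed

subsection \<open>The subshift \<open>X\<close>\<close>

lemma R_in_open: "z \<in> R \<Longrightarrow> 0 < z \<and> z < 1"
  unfolding iet_R_def iet_Dinf_def by auto

lemma R_dense:
  assumes "c < d" "0 \<le> c" "d \<le> 1"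
  shows "\<exists>z\<in>R. c < z \<and> z < d"
proof (rule ccontr)
  assume "\<not> ?thesis"
  then have sub: "{c<..<d} \<subseteq> iet_Dinf n a \<tau>" using assms unfolding iet_R_def by auto
  have "countable (iet_Dinf n a \<tau>)" unfolding iet_Dinf_def D_eq
    by (intro countable_Un countable_UN) (auto intro: countable_finite)
  then have "countable {c<..<d}" using sub countable_subset by blast
  then show False using uncountable_open_interval[of c d] assms by simp
qed

lemma I_near_right:
  assumes x: "x \<in> {0..<1}"
  shows "\<exists>\<delta>>0. \<forall>z. x \<le> z \<longrightarrow> z < x + \<delta> \<longrightarrow> I z j = I x j"
proof (cases "0 \<le> j")
  case True
  then obtain t where t: "j = int t" using nonneg_eq_int by blast
  obtain \<delta> where \<delta>: "\<delta> > 0" "\<forall>e\<in>{0..<\<delta>}. \<forall>i\<le>t. (T ^^ i) (x + e) = (T ^^ i) x + e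
      \<and> (T ^^ i) (x + e) \<in> {0..<1} \<and> cell ((T ^^ i) (x + e)) = cell ((T ^^ i) x)"
    using T.orbit_right_stable[OF x, of t] by blast
  have "I z j = I x j" if "x \<le> z" "z < x + \<delta>" for z
  proof -
    have "(T ^^ 0) (x + (z - x)) \<in> {0..<1}" "cell ((T ^^ t) (x + (z - x))) = cell ((T ^^ t) x)"
      using conjunct2[OF bspec[OF \<delta>(2), of "z - x", rule_format, OF _ le0]]
        conjunct2[OF bspec[OF \<delta>(2), of "z - x", rule_format, OF _ order_refl]] that by auto
    then show ?thesis using I_nat[of z t] I_nat[OF x, of t] t by simp
  qed
  then show ?thesis using \<delta>(1) by blast
next
  case False
  then obtain t where t: "j = - int (Suc t)" using int_neg_eq by force
  obtain \<delta> where \<delta>: "\<delta> > 0" "\<forall>e\<in>{0..<\<delta>}. \<forall>i\<le>t. (Tinv ^^ i) (x + e) = (Tinv ^^ i) x + e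
      \<and> (Tinv ^^ i) (x + e) \<in> {0..<1} \<and> pre_cell ((Tinv ^^ i) (x + e)) = pre_cell ((Tinv ^^ i) x)"
    using Tinv.orbit_right_stable[OF x, of t] by blast
  have "I z j = I x j" if "x \<le> z" "z < x + \<delta>" for z
  proof -
    have "(Tinv ^^ 0) (x + (z - x)) \<in> {0..<1}" "pre_cell ((Tinv ^^ t) (x + (z - x))) = pre_cell ((Tinv ^^ t) x)"
      using conjunct2[OF bspec[OF \<delta>(2), of "z - x", rule_format, OF _ le0]]
        conjunct2[OF bspec[OF \<delta>(2), of "z - x", rule_format, OF _ order_refl]] that by auto
    then show ?thesis using I_neg[of z t] I_neg[OF x, of t] t by simp
  qed
  then show ?thesis using \<delta>(1) by blast
qed

lemma I_near_left:
  assumes x: "x \<in> {0<..1}"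
  shows "\<exists>\<delta>>0. \<forall>z. x - \<delta> < z \<longrightarrow> z < x \<longrightarrow> I z j = I_d x j"
proof (cases "0 \<le> j")
  case True
  then obtain t where t: "j = int t" using nonneg_eq_int by blast
  obtain \<delta> where \<delta>: "\<delta> > 0" "\<forall>e\<in>{-\<delta><..<0}. \<forall>i\<le>t. (T ^^ i) (x + e) = (Td ^^ i) x + e
      \<and> (T ^^ i) (x + e) \<in> {0..<1} \<and> cell ((T ^^ i) (x + e)) = cell_d ((Td ^^ i) x)"
    using T_follows_Td[OF x, of t] by blast
  have "I z j = I_d x j" if "x - \<delta> < z" "z < x" for z
  proof -
    have "(T ^^ 0) (x + (z - x)) \<in> {0..<1}" "cell ((T ^^ t) (x + (z - x))) = cell_d ((Td ^^ t) x)"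
      using conjunct2[OF bspec[OF \<delta>(2), of "z - x", rule_format, OF _ le0]]
        conjunct2[OF bspec[OF \<delta>(2), of "z - x", rule_format, OF _ order_refl]] that by auto
    then show ?thesis using I_nat[of z t] I_d_nat[OF x, of t] t by simp
  qed
  then show ?thesis using \<delta>(1) by blast
next
  case False
  then obtain t where t: "j = - int (Suc t)" using int_neg_eq by force
  obtain \<delta> where \<delta>: "\<delta> > 0" "\<forall>e\<in>{-\<delta><..<0}. \<forall>i\<le>t. (Tinv ^^ i) (x + e) = (Tdinv ^^ i) x + e
      \<and> (Tinv ^^ i) (x + e) \<in> {0..<1} \<and> pre_cell ((Tinv ^^ i) (x + e)) = pre_cell_d ((Tdinv ^^ i) x)"
    using Tinv_follows_Tdinv[OF x, of t] by blast
  have "I z j = I_d x j" if "x - \<delta> < z" "z < x" for z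
  proof -
    have "(Tinv ^^ 0) (x + (z - x)) \<in> {0..<1}"
      "pre_cell ((Tinv ^^ t) (x + (z - x))) = pre_cell_d ((Tdinv ^^ t) x)"
      using conjunct2[OF bspec[OF \<delta>(2), of "z - x", rule_format, OF _ le0]]
        conjunct2[OF bspec[OF \<delta>(2), of "z - x", rule_format, OF _ order_refl]] that by auto
    then show ?thesis using I_neg[of z t] I_d_neg[OF x, of t] t by simp
  qed
  then show ?thesis using \<delta>(1) by blast
qed

lemma tendsto_I_right:
  assumes x: "x \<in> {0..<1}" and lim: "(z \<longlongrightarrow> x) F" and ge: "eventually (\<lambda>k. x \<le> z k) F"
  shows "((\<lambda>k. I (z k)) \<longlongrightarrow> I x) F"
  unfolding tendsto_int_nat_iff
proof
  fix j
  obtain \<delta> where \<delta>: "\<delta> > 0" "\<And>w. x \<le> w \<Longrightarrow> w < x + \<delta> \<Longrightarrow> I w j = I x j"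
    using I_near_right[OF x, of j] by blast
  show "eventually (\<lambda>k. I (z k) j = I x j) F"
  proof -
    have "eventually (\<lambda>k. z k < x + \<delta>) F" using order_tendstoD(2)[OF lim, of "x + \<delta>"] \<delta>(1) by simp
    then show ?thesis using ge by eventually_elim (blast intro: \<delta>(2))
  qed
qed

lemma tendsto_I_left:
  assumes x: "x \<in> {0<..1}" and lim: "(z \<longlongrightarrow> x) F" and lt: "eventually (\<lambda>k. z k < x) F"
  shows "((\<lambda>k. I (z k)) \<longlongrightarrow> I_d x) F"
  unfolding tendsto_int_nat_iff
proof
  fix j
  obtain \<delta> where \<delta>: "\<delta> > 0" "\<And>w. x - \<delta> < w \<Longrightarrow> w < x \<Longrightarrow> I w j = I_d x j"
    using I_near_left[OF x, of j] by blast
  show "eventually (\<lambda>k. I (z k) j = I_d x j) F"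
  proof -
    have "eventually (\<lambda>k. x - \<delta> < z k) F" using order_tendstoD(1)[OF lim, of "x - \<delta>"] \<delta>(1) by simp
    then show ?thesis using lt by eventually_elim (blast intro: \<delta>(2))
  qed
qed

lemma I_in_X:
  assumes x: "x \<in> {0..<1}"
  shows "I x \<in> X"
proof -
  have "\<exists>z. z \<in> R \<and> x < z \<and> z < min (x + inverse (real (Suc k))) 1" for k
    using R_dense[of x "min (x + inverse (real (Suc k))) 1"] x by auto
  then obtain z where z: "\<And>k. z k \<in> R" "\<And>k. x < z k" "\<And>k. z k < x + inverse (real (Suc k))"
    by (metis min_less_iff_conj)
  have "z \<longlonglongrightarrow> x"
  proof (rule real_tendsto_sandwich[OF _ _ tendsto_const LIMSEQ_inverse_real_of_nat_add])
    show "eventually (\<lambda>k. x \<le> z k) sequentially" using z(2) by (simp add: less_imp_le)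
    show "eventually (\<lambda>k. z k \<le> x + inverse (real (Suc k))) sequentially"
      using z(3) by (simp add: less_imp_le)
  qed
  then have "(\<lambda>k. I (z k)) \<longlonglongrightarrow> I x"
    by (rule tendsto_I_right[OF x]) (use z(2) in \<open>simp add: less_imp_le\<close>)
  then show ?thesis unfolding iet_X_def closure_sequential
    using z(1) by (intro exI[of _ "\<lambda>k. I (z k)"]) auto
qed

lemma I_d_in_X:
  assumes x: "x \<in> {0<..1}"
  shows "I_d x \<in> X"
proof -
  have "\<exists>z. z \<in> R \<and> max (x - inverse (real (Suc k))) 0 < z \<and> z < x" for k
    using R_dense[of "max (x - inverse (real (Suc k))) 0" x] x by auto
  then obtain z where z: "\<And>k. z k \<in> R" "\<And>k. z k < x" "\<And>k. x - inverse (real (Suc k)) < z k"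
    by (metis max_less_iff_conj)
  have "z \<longlonglongrightarrow> x"
  proof (rule real_tendsto_sandwich[OF _ _ LIMSEQ_inverse_real_of_nat_add_minus tendsto_const])
    show "eventually (\<lambda>k. x + - inverse (real (Suc k)) \<le> z k) sequentially"
      using z(3) by (simp add: less_imp_le)
    show "eventually (\<lambda>k. z k \<le> x) sequentially" using z(2) by (simp add: less_imp_le)
  qed
  then have "(\<lambda>k. I (z k)) \<longlonglongrightarrow> I_d x" by (rule tendsto_I_left[OF x]) (simp add: z(2))
  then show ?thesis unfolding iet_X_def closure_sequential
    using z(1) by (intro exI[of _ "\<lambda>k. I (z k)"]) auto
qed

lemma X_monotone_approx:
  assumes "\<alpha> \<in> X"
  obtains y x where "\<And>k. 0 < y k \<and> y k < 1" "monoseq y" "y \<longlonglongrightarrow> x" "(\<lambda>k. I (y k)) \<longlonglongrightarrow> \<alpha>"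
proof -
  obtain s where s: "\<And>k. s k \<in> I ` R" "s \<longlonglongrightarrow> \<alpha>"
    using assms unfolding iet_X_def closure_sequential by blast
  have "\<forall>k. \<exists>x. x \<in> R \<and> s k = I x" using s(1) by blast
  then obtain z where z: "\<And>k. z k \<in> R \<and> s k = I (z k)" by metis
  then have lim: "(\<lambda>k. I (z k)) \<longlonglongrightarrow> \<alpha>"
    using s(2) by (simp add: fun_eq_iff[symmetric] flip: z[THEN conjunct2])
  obtain r where r: "strict_mono r" "monoseq (\<lambda>k. z (r k))" using seq_monosub by blast
  define y where "y k = z (r k)" for k
  have y01: "0 < y k \<and> y k < 1" for k using R_in_open z by (simp add: y_def)
  have "Bseq y" using y01 by (intro BseqI'[of _ 1]) (auto simp: less_imp_le)
  moreover have "monoseq y" using r(2) by (simp add: y_def[abs_def])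
  ultimately obtain x where "y \<longlonglongrightarrow> x" using Bseq_monoseq_convergent convergent_def by blast
  moreover have "(\<lambda>k. I (y k)) \<longlonglongrightarrow> \<alpha>"
    using LIMSEQ_subseq_LIMSEQ[OF lim r(1)] by (simp add: y_def o_def)
  ultimately show thesis using that y01 \<open>monoseq y\<close> by blast
qed

lemma X_is_itin:
  assumes "\<alpha> \<in> X"
  shows "is_itin \<alpha>"
proof -
  obtain y x where y01: "\<And>k. 0 < y k \<and> y k < 1" and mono: "monoseq y" and x: "y \<longlonglongrightarrow> x"
    and lim: "(\<lambda>k. I (y k)) \<longlonglongrightarrow> \<alpha>"
    using X_monotone_approx[OF assms] by blast
  have x01: "0 \<le> x" "x \<le> 1"
    using LIMSEQ_le_const[OF x, of 0] LIMSEQ_le_const2[OF x, of 1] y01 by (auto simp: less_imp_le)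
  consider (right) "eventually (\<lambda>k. x \<le> y k) sequentially" | (left) "\<And>k. y k < x"
    using monoseq_one_sided_limit[OF mono x] by blast
  then show ?thesis
  proof cases
    case right
    then have "eventually (\<lambda>k. x < 1) sequentially" by eventually_elim (meson y01 order_le_less_trans)
    then have "x \<in> {0..<1}" using x01 by simp
    moreover have "\<alpha> = I x"
      using tendsto_int_nat_unique[OF _ lim tendsto_I_right[OF _ x right]] \<open>x \<in> {0..<1}\<close> by simp
    ultimately show ?thesis unfolding is_itin_def by blast
  next
    case left
    have "0 < y 0" "y 0 < x" using y01[of 0] left[of 0] by auto
    then have "x \<in> {0<..1}" using x01 by simp
    moreover have "\<alpha> = I_d x"
      using tendsto_int_nat_unique[OF _ lim tendsto_I_left[OF _ x]] \<open>x \<in> {0<..1}\<close> left by simp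
    ultimately show ?thesis unfolding is_itin_def by blast
  qed
qed

lemma pos_asymp_iff:
  assumes "\<alpha> \<in> X" "\<beta> \<in> X" "\<alpha> \<noteq> \<beta>"
  shows "pos_asymp \<alpha> \<beta> \<longleftrightarrow>
    (\<exists>i\<in>{1..n - 1}. \<exists>k. let x = bt i in {\<alpha>, \<beta>} = {shiftk k (I x), shiftk k (I_d x)})"
  using pos_asymp_imp_bt_pair[OF X_is_itin X_is_itin] bt_pair_pos_asymp assms by (auto simp: Let_def)

lemma neg_asymp_iff:
  assumes "\<alpha> \<in> X" "\<beta> \<in> X" "\<alpha> \<noteq> \<beta>"
  shows "neg_asymp \<alpha> \<beta> \<longleftrightarrow>
    (\<exists>i\<in>{1..n - 1}. \<exists>k. let x = b i in {\<alpha>, \<beta>} = {shiftk k (I x), shiftk k (I_d x)})"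
  using neg_asymp_imp_b_pair[OF X_is_itin X_is_itin] b_pair_neg_asymp assms by (auto simp: Let_def)

lemma not_split_doubly_asymp_in_X:
  assumes "\<not> split_perm n \<tau>"
  shows "\<exists>\<alpha>\<in>X. \<exists>\<beta>\<in>X. \<alpha> \<noteq> \<beta> \<and> doubly_asymp \<alpha> \<beta>"
proof -
  obtain j where j: "j \<in> {1..n - 1}" "I (b j) \<noteq> I_d (b j)" "doubly_asymp (I (b j)) (I_d (b j))"
    using not_split_doubly_asymp_pair[OF assms] by blast
  then have "0 < j" "j < n" by auto
  then have "b j \<in> {0..<1}" "b j \<in> {0<..1}" using b_less[of 0 j] b_less[of j n] bn by auto
  then show ?thesis using I_in_X I_d_in_X j by blast
qed

end

theorem theorem4p5:
  fixes n :: nat and a :: "nat \<Rightarrow> real" and \<tau> :: "nat \<Rightarrow> nat"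
  assumes n2: "n \<ge> 2"
    and apos: "\<forall>i\<in>{1..n}. a i > 0"
    and asum: "(\<Sum>i=1..n. a i) = 1"
    and perm: "\<tau> permutes {1..n}"
    and irr: "irreducible_perm n \<tau>"
    and kea: "keane n a \<tau>"
  shows
    "(\<forall>\<alpha>\<in>iet_X n a \<tau>. \<forall>\<beta>\<in>iet_X n a \<tau>. \<alpha> \<noteq> \<beta> \<longrightarrow>
        (pos_asymp \<alpha> \<beta> \<longleftrightarrow>
          (\<exists>i\<in>{1..n-1}. \<exists>k::int. let x = iet_btau a \<tau> i in
             {\<alpha>, \<beta>} = {shiftk k (itin n a \<tau> x), shiftk k (itin_d n a \<tau> x)})))
   \<and> (\<forall>\<alpha>\<in>iet_X n a \<tau>. \<forall>\<beta>\<in>iet_X n a \<tau>. \<alpha> \<noteq> \<beta> \<longrightarrow>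
        (neg_asymp \<alpha> \<beta> \<longleftrightarrow>
          (\<exists>i\<in>{1..n-1}. \<exists>k::int. let x = iet_b a i in
             {\<alpha>, \<beta>} = {shiftk k (itin n a \<tau> x), shiftk k (itin_d n a \<tau> x)})))
   \<and> (\<forall>x\<in>{0..<1}. \<forall>y\<in>{0<..1}. itin n a \<tau> x = itin_d n a \<tau> y \<longrightarrow>
        x = y \<and> x \<in> iet_R n a \<tau>)
   \<and> (fully_split_perm n \<tau> \<longrightarrow>
        (\<forall>\<alpha>\<in>iet_X n a \<tau>. \<forall>\<beta>\<in>iet_X n a \<tau>. doubly_asymp \<alpha> \<beta> \<longrightarrow> \<alpha> = \<beta>))
   \<and> (\<not> split_perm n \<tau> \<longrightarrow>
        (\<exists>\<alpha>\<in>iet_X n a \<tau>. \<exists>\<beta>\<in>iet_X n a \<tau>. \<alpha> \<noteq> \<beta> \<and> doubly_asymp \<alpha> \<beta>))"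
proof -
  interpret iet n a \<tau> using assms by unfold_locales
  show ?thesis
  proof (intro conjI ballI impI)
    fix \<alpha> \<beta> assume "\<alpha> \<in> X" "\<beta> \<in> X" "\<alpha> \<noteq> \<beta>"
    then show "pos_asymp \<alpha> \<beta> \<longleftrightarrow>
        (\<exists>i\<in>{1..n - 1}. \<exists>k. let x = bt i in {\<alpha>, \<beta>} = {shiftk k (I x), shiftk k (I_d x)})"
      and "neg_asymp \<alpha> \<beta> \<longleftrightarrow>
        (\<exists>i\<in>{1..n - 1}. \<exists>k. let x = b i in {\<alpha>, \<beta>} = {shiftk k (I x), shiftk k (I_d x)})"
      by (rule pos_asymp_iff neg_asymp_iff)+
  next
    fix x y assume "x \<in> {0..<1}" "y \<in> {0<..1}" "I x = I_d y"
    then show "x = y" "x \<in> R" using I_eq_I_d_imp_regular by blast+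
  next
    fix \<alpha> \<beta> assume "fully_split_perm n \<tau>" "\<alpha> \<in> X" "\<beta> \<in> X" "doubly_asymp \<alpha> \<beta>"
    then show "\<alpha> = \<beta>" using fully_split_doubly_asymp_eq X_is_itin by blast
  next
    assume "\<not> split_perm n \<tau>"
    then show "\<exists>\<alpha>\<in>X. \<exists>\<beta>\<in>X. \<alpha> \<noteq> \<beta> \<and> doubly_asymp \<alpha> \<beta>" by (rule not_split_doubly_asymp_in_X)
  qed
qed

end
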